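(* Let $D$ be an integral domain, $\star$ a semistar operation on $D$, and $n$ a nonnegative integer. The following are equivalent: (1) every $(\star,d_T)$-linked overring $T$ of $D$ has Krull dimension at most $n$; (2) every $\widetilde{\star}$-valuation overring of $D$ has Krull dimension at most $n$.
   Context: $D$ is an integral domain with quotient field $K$; $f(D)$ denotes nonzero finitely generated fractional ideals, $\overline{\mathcal F}(D)$ nonzero $D$-submodules of $K$. A semistar operation $\star$ on $D$ is a map $\overline{\mathcal F}(D)\to\overline{\mathcal F}(D)$ with $(xE)^\star=xE^\star$ ($0\neq x\in K$), $E\subseteq F\Rightarrow E^\star\subseteq F^\star$, $E\subseteq E^\star=(E^\star)^\star$. $E^{\star_f}:=\bigcup\{F^\star:F\in f(D),F\subseteq E\}$. A nonzero ideal $I$ is a quasi-$\star_f$-ideal if $I^{\star_f}\cap D=I$; $\operatorname{QMax}^{\star_f}(D)$ is the set of maximal proper quasi-$\star_f$-ideals. $E^{\widetilde\star}:=\bigcap\{ED_M:M\in\operatorname{QMax}^{\star_f}(D)\}$ ($=K$ if empty). A valuation overring $V$ of $D$ is a $\widetilde\star$-valuation overring if $F^{\widetilde\star}\subseteq FV$ for all $F\in f(D)$. An overring $T$ of $D$ ($D\subseteq T\subseteq K$) is $(\star,d_T)$-linked to $D$ if for every nonzero finitely generated ideal $F$ of $D$ with $F^\star=D^\star$ one has $FT=T$. *)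

theory Defs
  imports Main
begin

text \<open>Convention: the integral domain D is a subring of an ambient field of type 'a;
its quotient field K is realised as the subfield of fractions of D inside 'a.\<close>

definition is_subring :: "'a::field set \<Rightarrow> bool" where
  "is_subring D \<longleftrightarrow> 0 \<in> D \<and> 1 \<in> D \<and>
     (\<forall>x\<in>D. \<forall>y\<in>D. x + y \<in> D \<and> x - y \<in> D \<and> x * y \<in> D)"

definition qfield :: "'a::field set \<Rightarrow> 'a set" where
  "qfield D = {x / y | x y. x \<in> D \<and> y \<in> D \<and> y \<noteq> 0}"

definition is_submod :: "'a::field set \<Rightarrow> 'a set \<Rightarrow> bool" where
  "is_submod D E \<longleftrightarrow> E \<subseteq> qfield D \<and> 0 \<in> E \<and>
     (\<forall>x\<in>E. \<forall>y\<in>E. x + y \<in> E) \<and> (\<forall>d\<in>D. \<forall>x\<in>E. d * x \<in> E)"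

definition Fbar :: "'a::field set \<Rightarrow> 'a set set" where
  "Fbar D = {E. is_submod D E \<and> E \<noteq> {0}}"

definition dspan :: "'a::field set \<Rightarrow> 'a set \<Rightarrow> 'a set" where
  "dspan D S = {(\<Sum>s\<in>S. c s * s) | c. \<forall>s\<in>S. c s \<in> D}"

definition fD :: "'a::field set \<Rightarrow> 'a set set" where
  "fD D = {dspan D S | S. finite S \<and> S \<subseteq> qfield D \<and> dspan D S \<noteq> {0}}"

definition smul :: "'a::field \<Rightarrow> 'a set \<Rightarrow> 'a set" where
  "smul x E = (\<lambda>e. x * e) ` E"

definition submod_prod :: "'a::field set \<Rightarrow> 'a set \<Rightarrow> 'a set" where
  "submod_prod A B = {(\<Sum>i<n. a i * b i) | (n::nat) a b. \<forall>i<n. a i \<in> A \<and> b i \<in> B}"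

definition semistar :: "'a::field set \<Rightarrow> ('a set \<Rightarrow> 'a set) \<Rightarrow> bool" where
  "semistar D st \<longleftrightarrow>
     (\<forall>E\<in>Fbar D. st E \<in> Fbar D) \<and>
     (\<forall>x\<in>qfield D. \<forall>E\<in>Fbar D. x \<noteq> 0 \<longrightarrow> st (smul x E) = smul x (st E)) \<and>
     (\<forall>E\<in>Fbar D. \<forall>F\<in>Fbar D. E \<subseteq> F \<longrightarrow> st E \<subseteq> st F) \<and>
     (\<forall>E\<in>Fbar D. E \<subseteq> st E \<and> st (st E) = st E)"

definition star_f :: "'a::field set \<Rightarrow> ('a set \<Rightarrow> 'a set) \<Rightarrow> 'a set \<Rightarrow> 'a set" where
  "star_f D st E = \<Union>{st F | F. F \<in> fD D \<and> F \<subseteq> E}"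

definition is_ideal :: "'a::field set \<Rightarrow> 'a set \<Rightarrow> bool" where
  "is_ideal T I \<longleftrightarrow> I \<subseteq> T \<and> 0 \<in> I \<and>
     (\<forall>x\<in>I. \<forall>y\<in>I. x + y \<in> I \<and> x - y \<in> I) \<and> (\<forall>t\<in>T. \<forall>x\<in>I. t * x \<in> I)"

definition quasi_ideal :: "'a::field set \<Rightarrow> ('a set \<Rightarrow> 'a set) \<Rightarrow> 'a set \<Rightarrow> bool" where
  "quasi_ideal D st I \<longleftrightarrow> is_ideal D I \<and> I \<noteq> {0} \<and> star_f D st I \<inter> D = I"

definition QMax :: "'a::field set \<Rightarrow> ('a set \<Rightarrow> 'a set) \<Rightarrow> 'a set set" where
  "QMax D st = {M. quasi_ideal D st M \<and> M \<noteq> D \<and>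
      (\<forall>J. quasi_ideal D st J \<and> J \<noteq> D \<and> M \<subseteq> J \<longrightarrow> J = M)}"

definition loc :: "'a::field set \<Rightarrow> 'a set \<Rightarrow> 'a set" where
  "loc D M = {x / s | x s. x \<in> D \<and> s \<in> D \<and> s \<notin> M}"

definition star_tilde :: "'a::field set \<Rightarrow> ('a set \<Rightarrow> 'a set) \<Rightarrow> 'a set \<Rightarrow> 'a set" where
  "star_tilde D st E = (if QMax D st = {} then qfield D
      else \<Inter>{submod_prod E (loc D M) | M. M \<in> QMax D st})"

definition overring :: "'a::field set \<Rightarrow> 'a set \<Rightarrow> bool" where
  "overring D T \<longleftrightarrow> is_subring T \<and> D \<subseteq> T \<and> T \<subseteq> qfield D"

definition valuation_overring :: "'a::field set \<Rightarrow> 'a set \<Rightarrow> bool" where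
  "valuation_overring D V \<longleftrightarrow> overring D V \<and>
     (\<forall>x\<in>qfield D. x \<noteq> 0 \<longrightarrow> x \<in> V \<or> inverse x \<in> V)"

definition tilde_valuation_overring :: "'a::field set \<Rightarrow> ('a set \<Rightarrow> 'a set) \<Rightarrow> 'a set \<Rightarrow> bool" where
  "tilde_valuation_overring D st V \<longleftrightarrow> valuation_overring D V \<and>
     (\<forall>F\<in>fD D. star_tilde D st F \<subseteq> submod_prod F V)"

definition star_dT_linked :: "'a::field set \<Rightarrow> ('a set \<Rightarrow> 'a set) \<Rightarrow> 'a set \<Rightarrow> bool" where
  "star_dT_linked D st T \<longleftrightarrow> overring D T \<and>
     (\<forall>F\<in>fD D. F \<subseteq> D \<and> st F = st D \<longrightarrow> submod_prod F T = T)"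

definition prime_ideal :: "'a::field set \<Rightarrow> 'a set \<Rightarrow> bool" where
  "prime_ideal T P \<longleftrightarrow> is_ideal T P \<and> P \<noteq> T \<and>
     (\<forall>x\<in>T. \<forall>y\<in>T. x * y \<in> P \<longrightarrow> x \<in> P \<or> y \<in> P)"

text \<open>Krull dimension at most n: no strict chain of n+2 prime ideals.\<close>
definition krull_dim_le :: "'a::field set \<Rightarrow> nat \<Rightarrow> bool" where
  "krull_dim_le T n \<longleftrightarrow> \<not> (\<exists>P :: nat \<Rightarrow> 'a set.
      (\<forall>i\<le>Suc n. prime_ideal T (P i)) \<and> (\<forall>i\<le>n. P i \<subset> P (Suc i)))"

end

theory Submission
  imports Defs "HOL-Computational_Algebra.Polynomial" "HOL-Library.Set_Algebras"
begin

text \<open>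
  (1) \<open>\<Rightarrow>\<close> (2): every \<open>\<star>\<close>-tilde valuation overring \<open>V\<close> is itself linked.  If \<open>F \<subseteq> D\<close> is
  finitely generated with \<open>F\<^sup>\<star> = D\<^sup>\<star>\<close>, then \<open>F\<close> lies in no quasi-\<open>\<star>\<^sub>f\<close>-maximal ideal \<open>M\<close>, so
  \<open>1 \<in> F D\<^sub>M\<close> for all \<open>M\<close>, i.e. \<open>1 \<in> F\<^sup>\<star>\<^sup>~ \<subseteq> F V\<close>, whence \<open>F V = V\<close>.

  (2) \<open>\<Rightarrow>\<close> (1): a chain of \<open>n + 2\<close> primes in a linked overring \<open>T\<close> lifts, via Chevalley's
  extension theorem, to a chain of \<open>n + 2\<close> primes in some valuation ring \<open>V \<supseteq> T\<close> of \<open>K\<close>; and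
  every such \<open>V\<close> is a \<open>\<star>\<close>-tilde valuation overring, because linkedness of \<open>T\<close> makes the
  centre \<open>M\<^sub>V \<inter> D\<close> \<open>\<star>\<^sub>f\<close>-proper, so it lies in a quasi-\<open>\<star>\<^sub>f\<close>-maximal \<open>M\<close> with \<open>D\<^sub>M \<subseteq> V\<close>.
\<close>

lemma submod_prod_iff:
  "z \<in> submod_prod A B \<longleftrightarrow>
     (\<exists>(n::nat) a b. z = (\<Sum>i<n. a i * b i) \<and> (\<forall>i<n. a i \<in> A \<and> b i \<in> B))"
  unfolding submod_prod_def by (rule mem_Collect_eq)

lemma submod_prod_least:
  assumes "0 \<in> C" "\<And>x y. x \<in> C \<Longrightarrow> y \<in> C \<Longrightarrow> x + y \<in> C"
    and "\<And>a b. a \<in> A \<Longrightarrow> b \<in> B \<Longrightarrow> a * b \<in> C"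
  shows "submod_prod A B \<subseteq> C"
proof
  fix z assume "z \<in> submod_prod A B"
  then obtain n :: nat and a b where z: "z = (\<Sum>i<n. a i * b i)"
    and ab: "\<forall>i<n. a i \<in> A \<and> b i \<in> B"
    unfolding submod_prod_iff by blast
  have "\<forall>i<m. a i \<in> A \<and> b i \<in> B \<Longrightarrow> (\<Sum>i<m. a i * b i) \<in> C" for m
    by (induction m) (auto intro: assms)
  with ab z show "z \<in> C" by blast
qed

lemma submod_prod_mult_mem: "a \<in> A \<Longrightarrow> b \<in> B \<Longrightarrow> a * b \<in> submod_prod A B"
  unfolding submod_prod_iff by (rule exI[of _ 1], rule exI[of _ "\<lambda>_. a"], rule exI[of _ "\<lambda>_. b"]) auto

lemma submod_prod_zero: "0 \<in> submod_prod A B"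
  unfolding submod_prod_iff by (rule exI[of _ 0]) auto

lemma submod_prod_add:
  assumes x: "x \<in> submod_prod A B" and y: "y \<in> submod_prod A B"
  shows "x + y \<in> submod_prod A B"
proof -
  have add_term: "z + a * b \<in> submod_prod A B"
    if z: "z \<in> submod_prod A B" and ab: "a \<in> A" "b \<in> B" for z a b
  proof -
    obtain n :: nat and f g where z_eq: "z = (\<Sum>i<n. f i * g i)" and fg: "\<forall>i<n. f i \<in> A \<and> g i \<in> B"
      using z unfolding submod_prod_iff by blast
    have "z + a * b = (\<Sum>i<Suc n. (f(n := a)) i * (g(n := b)) i)" by (simp add: z_eq)
    moreover have "\<forall>i<Suc n. (f(n := a)) i \<in> A \<and> (g(n := b)) i \<in> B"
      using fg ab by (auto simp: less_Suc_eq)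
    ultimately show ?thesis unfolding submod_prod_iff by blast
  qed
  obtain n :: nat and f g where y_eq: "y = (\<Sum>i<n. f i * g i)" and fg: "\<forall>i<n. f i \<in> A \<and> g i \<in> B"
    using y unfolding submod_prod_iff by blast
  have "\<forall>i<m. f i \<in> A \<and> g i \<in> B \<Longrightarrow> x + (\<Sum>i<m. f i * g i) \<in> submod_prod A B" for m
  proof (induction m)
    case 0 then show ?case using x by simp
  next
    case (Suc m)
    then have "x + (\<Sum>i<m. f i * g i) + f m * g m \<in> submod_prod A B"
      by (intro add_term) auto
    then show ?case by (simp add: add.assoc)
  qed
  then show ?thesis using fg y_eq by blast
qed

lemma submod_prod_mono: "A \<subseteq> A' \<Longrightarrow> B \<subseteq> B' \<Longrightarrow> submod_prod A B \<subseteq> submod_prod A' B'"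
  unfolding submod_prod_def by blast

lemma submod_prod_scale:
  assumes "x \<in> submod_prod A B" "\<And>b. b \<in> B \<Longrightarrow> s * b \<in> B"
  shows "s * x \<in> submod_prod A B"
proof -
  obtain n :: nat and f g where x: "x = (\<Sum>i<n. f i * g i)" and fg: "\<forall>i<n. f i \<in> A \<and> g i \<in> B"
    using assms(1) unfolding submod_prod_iff by blast
  have "s * x = (\<Sum>i<n. f i * (s * g i))" by (simp add: x sum_distrib_left mult.left_commute)
  moreover have "\<forall>i<n. f i \<in> A \<and> s * g i \<in> B" using fg assms(2) by auto
  ultimately show ?thesis unfolding submod_prod_iff
    by (intro exI[of _ n] exI[of _ f] exI[of _ "\<lambda>i. s * g i"]) simp
qed

lemma subringD:
  assumes "is_subring D"
  shows "0 \<in> D" "1 \<in> D" "x \<in> D \<Longrightarrow> y \<in> D \<Longrightarrow> x + y \<in> D"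
    "x \<in> D \<Longrightarrow> y \<in> D \<Longrightarrow> x - y \<in> D" "x \<in> D \<Longrightarrow> y \<in> D \<Longrightarrow> x * y \<in> D"
  using assms unfolding is_subring_def by auto

lemma subring_uminus: "is_subring D \<Longrightarrow> x \<in> D \<Longrightarrow> - x \<in> D"
  by (metis subringD(1) subringD(4) diff_0)

lemma subring_sum: "is_subring D \<Longrightarrow> (\<And>i. i \<in> I \<Longrightarrow> f i \<in> D) \<Longrightarrow> sum f I \<in> D"
  by (induction I rule: infinite_finite_induct) (auto intro: subringD)

lemma submod_prod_subring: "is_subring V \<Longrightarrow> A \<subseteq> V \<Longrightarrow> B \<subseteq> V \<Longrightarrow> submod_prod A B \<subseteq> V"
  by (rule submod_prod_least) (auto intro: subringD)

lemma submod_prod_eq_ring: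
  assumes V: "is_subring V" and FV: "F \<subseteq> V" and one: "1 \<in> submod_prod F V"
  shows "submod_prod F V = V"
proof
  show "submod_prod F V \<subseteq> V" using submod_prod_subring[OF V FV] by blast
  show "V \<subseteq> submod_prod F V"
  proof
    fix v assume "v \<in> V"
    then have "v * 1 \<in> submod_prod F V"
      using one by (intro submod_prod_scale) (auto intro: subringD(5)[OF V])
    then show "v \<in> submod_prod F V" by simp
  qed
qed

definition subfield :: "'a::field set \<Rightarrow> bool" where
  "subfield K \<longleftrightarrow> is_subring K \<and> (\<forall>x\<in>K. inverse x \<in> K)"

lemma subfield_subring: "subfield K \<Longrightarrow> is_subring K"
  unfolding subfield_def by auto

lemma subfield_inv: "subfield K \<Longrightarrow> x \<in> K \<Longrightarrow> inverse x \<in> K"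
  unfolding subfield_def by auto

lemma subfield_div: "subfield K \<Longrightarrow> x \<in> K \<Longrightarrow> y \<in> K \<Longrightarrow> x / y \<in> K"
  unfolding subfield_def by (auto simp: divide_inverse intro: subringD)

lemma qfieldI: "x \<in> D \<Longrightarrow> y \<in> D \<Longrightarrow> y \<noteq> 0 \<Longrightarrow> x / y \<in> qfield D"
  unfolding qfield_def by blast

lemma qfieldE:
  assumes "z \<in> qfield D"
  obtains x y where "z = x / y" "x \<in> D" "y \<in> D" "y \<noteq> 0"
  using assms unfolding qfield_def by blast

lemma qfield_subfield:
  assumes D: "is_subring D" shows "subfield (qfield D)"
  unfolding subfield_def is_subring_def
proof (intro conjI ballI)
  show "0 \<in> qfield D" "1 \<in> qfield D"
    using qfieldI[of 0 D 1] qfieldI[of 1 D 1] subringD(1,2)[OF D] by auto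
next
  fix u v assume "u \<in> qfield D" "v \<in> qfield D"
  then obtain x y x' y' where uv: "u = x / y" "x \<in> D" "y \<in> D" "y \<noteq> 0"
    "v = x' / y'" "x' \<in> D" "y' \<in> D" "y' \<noteq> 0" by (meson qfieldE)
  moreover have "x / y + x' / y' = (x * y' + x' * y) / (y * y')"
    "x / y - x' / y' = (x * y' - x' * y) / (y * y')" "x / y * (x' / y') = (x * x') / (y * y')"
    using uv(4,8) by (simp_all add: field_simps)
  ultimately have "u + v = (x * y' + x' * y) / (y * y')" "u - v = (x * y' - x' * y) / (y * y')"
    "u * v = (x * x') / (y * y')" by simp_all
  then show "u + v \<in> qfield D" "u - v \<in> qfield D" "u * v \<in> qfield D"
    using uv by (auto intro!: qfieldI subringD[OF D])
next
  fix u assume "u \<in> qfield D"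
  then obtain x y where u: "u = x / y" "x \<in> D" "y \<in> D" "y \<noteq> 0" by (meson qfieldE)
  show "inverse u \<in> qfield D"
  proof (cases "x = 0")
    case True then show ?thesis using u qfieldI[of 0 D 1] subringD(1,2)[OF D] by simp
  next
    case False then show ?thesis using u qfieldI[of y D x] by simp
  qed
qed

lemma D_sub_qfield: "is_subring D \<Longrightarrow> D \<subseteq> qfield D"
  unfolding qfield_def using subringD(2) by force

lemma idealD:
  assumes "is_ideal T P"
  shows "P \<subseteq> T" "0 \<in> P" "\<And>x y. x \<in> P \<Longrightarrow> y \<in> P \<Longrightarrow> x + y \<in> P"
    "\<And>x y. x \<in> P \<Longrightarrow> y \<in> P \<Longrightarrow> x - y \<in> P" "\<And>t x. t \<in> T \<Longrightarrow> x \<in> P \<Longrightarrow> t * x \<in> P"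
  using assms unfolding is_ideal_def by auto

lemma ideal_one_eq: "is_ideal D J \<Longrightarrow> 1 \<in> J \<Longrightarrow> J = D"
  unfolding is_ideal_def by (metis mult.right_neutral subsetI subset_antisym)

lemma prime_idealD:
  assumes "prime_ideal T P"
  shows "is_ideal T P" "\<And>x y. x \<in> T \<Longrightarrow> y \<in> T \<Longrightarrow> x * y \<in> P \<Longrightarrow> x \<in> P \<or> y \<in> P"
  using assms unfolding prime_ideal_def by auto

lemma prime_one: "prime_ideal T P \<Longrightarrow> 1 \<notin> P"
  unfolding prime_ideal_def using ideal_one_eq by blast

lemma prime_ideal_subring:
  assumes Q: "prime_ideal W Q" and V: "is_subring V" and QV: "Q \<subseteq> V" and VW: "V \<subseteq> W"
  shows "prime_ideal V Q"
proof -
  note Qi = idealD[OF prime_idealD(1)[OF Q]]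
  have "is_ideal V Q" unfolding is_ideal_def using QV Qi(2-5) VW by (meson subsetD)
  moreover have "Q \<noteq> V" using prime_one[OF Q] subringD(2)[OF V] by blast
  ultimately show ?thesis using prime_idealD(2)[OF Q] VW unfolding prime_ideal_def by blast
qed

section \<open>Valuation rings\<close>

definition valring :: "'a::field set \<Rightarrow> 'a set \<Rightarrow> bool" where
  "valring K V \<longleftrightarrow> is_subring V \<and> V \<subseteq> K \<and> (\<forall>x\<in>K. x \<noteq> 0 \<longrightarrow> x \<in> V \<or> inverse x \<in> V)"

definition maxv :: "'a::field set \<Rightarrow> 'a set" where
  "maxv V = {v\<in>V. v = 0 \<or> inverse v \<notin> V}"

lemma valringD:
  assumes "valring K V"
  shows "is_subring V" "V \<subseteq> K" "x \<in> K \<Longrightarrow> x \<noteq> 0 \<Longrightarrow> x \<notin> V \<Longrightarrow> inverse x \<in> V"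
  using assms unfolding valring_def by auto

lemma maxv_sub: "maxv V \<subseteq> V" unfolding maxv_def by auto

lemma one_notin_maxv: "1 \<notin> maxv V" unfolding maxv_def by auto

lemma notin_maxv: "v \<in> V \<Longrightarrow> v \<notin> maxv V \<Longrightarrow> v \<noteq> 0 \<and> inverse v \<in> V"
  unfolding maxv_def by auto

lemma maxv_mult:
  assumes V: "is_subring V" and t: "t \<in> V" and x: "x \<in> maxv V" shows "t * x \<in> maxv V"
proof -
  have xV: "x \<in> V" and x0: "x = 0 \<or> inverse x \<notin> V" using x unfolding maxv_def by auto
  have "inverse (t * x) \<notin> V" if "t * x \<noteq> 0"
  proof
    assume "inverse (t * x) \<in> V"
    then have "t * inverse (t * x) \<in> V" using V t by (auto intro: subringD)
    moreover have "t * inverse (t * x) = inverse x" using that by (simp add: field_simps)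
    ultimately have "inverse x \<in> V" by metis
    then show False using x0 that by auto
  qed
  then show ?thesis using xV V t unfolding maxv_def by (auto intro: subringD)
qed

text \<open>Additivity uses that of two nonzero elements one divides the other in \<open>V\<close>.\<close>
lemma maxv_add:
  assumes K: "subfield K" and V: "valring K V" and x: "x \<in> maxv V" and y: "y \<in> maxv V"
  shows "x + y \<in> maxv V"
proof (cases "x = 0 \<or> y = 0")
  case True then show ?thesis using x y by auto
next
  case False
  have sV: "is_subring V" and VK: "V \<subseteq> K" using valringD[OF V] by auto
  have "x / y \<in> K" using subfield_div[OF K] x y maxv_sub VK by blast
  moreover have "x / y \<noteq> 0" using False by simp
  ultimately have "x / y \<in> V \<or> inverse (x / y) \<in> V" using valringD(3)[OF V] by blast
  then show ?thesis
  proof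
    assume "x / y \<in> V"
    moreover have "x + y = (1 + x / y) * y" using False by (simp add: field_simps)
    ultimately show ?thesis using maxv_mult[OF sV _ y] subringD(2,3)[OF sV] by metis
  next
    assume "inverse (x / y) \<in> V"
    moreover have "x + y = (1 + inverse (x / y)) * x" using False by (simp add: field_simps)
    ultimately show ?thesis using maxv_mult[OF sV _ x] subringD(2,3)[OF sV] by metis
  qed
qed

lemma maxv_prime:
  assumes K: "subfield K" and V: "valring K V"
  shows "prime_ideal V (maxv V)"
proof -
  have sV: "is_subring V" using valringD[OF V] by auto
  have ideal: "is_ideal V (maxv V)"
    unfolding is_ideal_def
  proof (intro conjI ballI)
    show "maxv V \<subseteq> V" by (rule maxv_sub)
    show "0 \<in> maxv V" unfolding maxv_def using subringD(1)[OF sV] by auto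
  next
    fix x y assume x: "x \<in> maxv V" and y: "y \<in> maxv V"
    then show "x + y \<in> maxv V" using maxv_add[OF K V] by auto
    have "(- 1) * y \<in> maxv V"
      using maxv_mult[OF sV subring_uminus[OF sV subringD(2)[OF sV]] y] .
    then have "x + (- 1) * y \<in> maxv V" using maxv_add[OF K V x] by blast
    then show "x - y \<in> maxv V" by simp
  next
    fix t x assume "t \<in> V" "x \<in> maxv V"
    then show "t * x \<in> maxv V" by (rule maxv_mult[OF sV])
  qed
  moreover have "maxv V \<noteq> V" using one_notin_maxv subringD(2)[OF sV] by blast
  moreover have "x \<in> maxv V \<or> y \<in> maxv V" if "x \<in> V" "y \<in> V" "x * y \<in> maxv V" for x y
  proof (rule ccontr)
    assume "\<not> ?thesis"
    then have "x \<noteq> 0" "y \<noteq> 0" "inverse x \<in> V" "inverse y \<in> V" using that unfolding maxv_def by auto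
    then have "inverse (x * y) \<in> V" using sV by (auto intro: subringD simp: mult.commute)
    then show False using that \<open>x \<noteq> 0\<close> \<open>y \<noteq> 0\<close> unfolding maxv_def by auto
  qed
  ultimately show ?thesis unfolding prime_ideal_def by blast
qed

lemma prime_sub_maxv:
  assumes W: "is_subring W" and Q: "prime_ideal W Q" shows "Q \<subseteq> maxv W"
proof
  fix q assume q: "q \<in> Q"
  note Qi = idealD[OF prime_idealD(1)[OF Q]]
  show "q \<in> maxv W"
  proof (rule ccontr)
    assume "q \<notin> maxv W"
    then have "q \<noteq> 0" "inverse q \<in> W" using notin_maxv q Qi(1) by auto
    then have "1 \<in> Q" using Qi(5)[OF _ q] by force
    then show False using prime_one[OF Q] by simp
  qed
qed

lemma loc_I: "x \<in> D \<Longrightarrow> s \<in> D \<Longrightarrow> s \<notin> M \<Longrightarrow> x / s \<in> loc D M"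
  unfolding loc_def by blast

lemma loc_E:
  assumes "z \<in> loc D M"
  obtains x s where "z = x / s" "x \<in> D" "s \<in> D" "s \<notin> M"
  using assms unfolding loc_def by blast

section \<open>Chevalley's extension theorem\<close>

definition adjoin :: "'a::field set \<Rightarrow> 'a \<Rightarrow> 'a set" where
  "adjoin S y = {poly p y | p. \<forall>i. coeff p i \<in> S}"

lemma adjoinI: "\<forall>i. coeff p i \<in> S \<Longrightarrow> poly p y \<in> adjoin S y"
  unfolding adjoin_def by blast

lemma adjoinE:
  assumes "z \<in> adjoin S y"
  obtains p where "z = poly p y" "\<forall>i. coeff p i \<in> S"
  using assms unfolding adjoin_def by blast

lemma poly_in_set:
  assumes "0 \<in> C" "\<And>a b. a \<in> C \<Longrightarrow> b \<in> C \<Longrightarrow> a + b \<in> C" "\<And>c. c \<in> C \<Longrightarrow> y * c \<in> C"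
    and "\<forall>i. coeff p i \<in> C"
  shows "poly p y \<in> C"
  using assms(4)
proof (induction p)
  case 0 then show ?case using assms(1) by simp
next
  case (pCons a p)
  then have "poly p y \<in> C" "a \<in> C" by (metis coeff_pCons_Suc, metis coeff_pCons_0)
  then show ?case using assms(2,3) by simp
qed

lemma adjoin_subring:
  assumes S: "is_subring S" shows "is_subring (adjoin S y)"
proof -
  have mult: "\<forall>i. coeff (p * q) i \<in> S" if "\<forall>i. coeff p i \<in> S" "\<forall>i. coeff q i \<in> S" for p q
    unfolding coeff_mult using that by (blast intro: subring_sum[OF S] subringD(5)[OF S])
  show ?thesis unfolding is_subring_def
  proof (intro conjI ballI)
    show "0 \<in> adjoin S y" "1 \<in> adjoin S y"
      using adjoinI[of 0 S y] adjoinI[of 1 S y] subringD(1,2)[OF S] by simp_all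
  next
    fix a b assume "a \<in> adjoin S y" "b \<in> adjoin S y"
    then obtain p q where pq: "a = poly p y" "b = poly q y" "\<forall>i. coeff p i \<in> S" "\<forall>i. coeff q i \<in> S"
      by (metis adjoinE)
    have "\<forall>i. coeff (p + q) i \<in> S" "\<forall>i. coeff (p - q) i \<in> S"
      using pq by (auto intro: subringD[OF S])
    then show "a + b \<in> adjoin S y" "a - b \<in> adjoin S y" "a * b \<in> adjoin S y"
      using adjoinI[of "p + q" S y] adjoinI[of "p - q" S y] adjoinI[of "p * q" S y] mult pq by auto
  qed
qed

lemma adjoin_sup: assumes S: "is_subring S" shows "S \<subseteq> adjoin S y"
proof
  fix s assume "s \<in> S"
  then show "s \<in> adjoin S y"
    using adjoinI[of "[:s:]" S y] subringD(1)[OF S] by (simp add: coeff_pCons')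
qed

lemma adjoin_gen: assumes S: "is_subring S" shows "y \<in> adjoin S y"
  using adjoinI[of "[:0, 1:]" S y] subringD(1,2)[OF S] by (simp add: coeff_pCons')

lemma adjoin_in_subfield:
  assumes K: "subfield K" and SK: "S \<subseteq> K" and y: "y \<in> K" shows "adjoin S y \<subseteq> K"
proof
  fix z assume "z \<in> adjoin S y"
  then obtain p where z: "z = poly p y" "\<forall>i. coeff p i \<in> S" by (metis adjoinE)
  show "z \<in> K" unfolding z(1)
    by (rule poly_in_set) (use z(2) SK y in \<open>auto intro: subringD[OF subfield_subring[OF K]]\<close>)
qed

lemma adjoin_prod:
  assumes S: "is_subring S" and z: "z \<in> submod_prod P (adjoin S y)"
  shows "\<exists>p. (\<forall>i. coeff p i \<in> submod_prod P S) \<and> poly p y = z"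
proof -
  let ?C = "{poly p y | p. \<forall>i. coeff p i \<in> submod_prod P S}"
  have "submod_prod P (adjoin S y) \<subseteq> ?C"
  proof (rule submod_prod_least)
    show "0 \<in> ?C" using submod_prod_zero by (intro CollectI exI[of _ 0]) auto
  next
    fix a b assume "a \<in> ?C" "b \<in> ?C"
    then obtain p q where "a = poly p y" "b = poly q y" "\<forall>i. coeff p i \<in> submod_prod P S"
      "\<forall>i. coeff q i \<in> submod_prod P S" by blast
    then show "a + b \<in> ?C" by (intro CollectI exI[of _ "p + q"]) (simp add: submod_prod_add)
  next
    fix a b assume a: "a \<in> P" and "b \<in> adjoin S y"
    then obtain q where "b = poly q y" "\<forall>i. coeff q i \<in> S" by (metis adjoinE)
    then show "a * b \<in> ?C" using a
      by (intro CollectI exI[of _ "smult a q"]) (simp add: submod_prod_mult_mem)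
  qed
  then show ?thesis using z by blast
qed

text \<open>The key fact is that no nonzero \<open>x\<close> satisfies
  both \<open>p(x) = 1\<close> and \<open>q(1/x) = 1\<close> with coefficients of \<open>p\<close>, \<open>q\<close> in \<open>I\<close>.\<close>
locale jacobson_ideal =
  fixes S I :: "'a::field set"
  assumes S: "is_subring S"
    and I0: "0 \<in> I" and Iadd: "\<And>a b. a \<in> I \<Longrightarrow> b \<in> I \<Longrightarrow> a + b \<in> I"
    and Idiff: "\<And>a b. a \<in> I \<Longrightarrow> b \<in> I \<Longrightarrow> a - b \<in> I"
    and Imul: "\<And>s a. s \<in> S \<Longrightarrow> a \<in> I \<Longrightarrow> s * a \<in> I"
    and IS: "I \<subseteq> S" and I1: "1 \<notin> I"
    and unit: "\<And>c. c \<in> I \<Longrightarrow> inverse (1 - c) \<in> S"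
begin

text \<open>If \<open>deg q \<le> deg p\<close>, the relation \<open>q(1/x) = 1\<close> allows to lower the degree of \<open>p\<close>:
  \<open>x\<^sup>l (1 - q\<^sub>0) = \<dots>\<close> expresses the leading power of \<open>x\<close> through lower ones.\<close>
lemma degree_reduction:
  assumes x: "x \<noteq> 0" and p: "\<forall>i. coeff p i \<in> I" "poly p x = 1"
    and q: "\<forall>i. coeff q i \<in> I" "poly q (inverse x) = 1" and le: "degree q \<le> degree p"
  shows "\<exists>p'. (\<forall>i. coeff p' i \<in> I) \<and> poly p' x = 1 \<and> degree p' < degree p"
proof -
  define l where "l = degree q"
  define k where "k = degree p"
  have l0: "l \<noteq> 0"
  proof
    assume "l = 0"
    then have "q = [:coeff q 0:]" unfolding l_def by (metis degree_0_id)
    then have "poly q (inverse x) = coeff q 0" by (metis add.right_neutral mult_zero_right poly_0 poly_pCons)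
    then show False using q I1 by (metis (no_types))
  qed
  have lk: "l \<le> k" using le l_def k_def by simp
  define q0 where "q0 = coeff q 0"
  have q0I: "q0 \<in> I" using q q0_def by auto
  define u where "u = 1 - q0"
  have u0: "u \<noteq> 0" using q0I I1 u_def by auto
  have iuS: "inverse u \<in> S" using unit q0I u_def by simp
  \<comment> \<open>\<open>g(x) = u x\<^sup>l\<close>, where \<open>g\<close> is the reflection of \<open>q\<close> minus its top term\<close>
  define g where "g = reflect_poly q - monom q0 l"
  have pg: "poly g x = u * x ^ l"
    using poly_reflect_poly_nz[OF x, of q] q unfolding g_def u_def l_def
    by (simp add: poly_monom algebra_simps)
  have cg: "coeff g j = (if j > l then 0 else coeff q (l - j)) - (if l = j then q0 else 0)" for j
    unfolding g_def l_def by (simp add: coeff_reflect_poly)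
  have cgI: "coeff g j \<in> I" for j unfolding cg using q q0I I0 by (auto intro!: Idiff)
  have cg0: "coeff g j = 0" if "j \<ge> l" for j using that unfolding cg q0_def by auto
  define a where "a = coeff p k"
  have aI: "a \<in> I" using p a_def by auto
  define h where "h = monom 1 (k - l) * g"
  have ph: "poly h x = u * x ^ k" unfolding h_def using pg lk
    by (simp add: poly_monom algebra_simps flip: power_add)
  have ch: "coeff h i = (if i < k - l then 0 else coeff g (i - (k - l)))" for i
    unfolding h_def by (simp add: coeff_monom_mult)
  have chI: "coeff h i \<in> I" for i unfolding ch using I0 cgI by auto
  \<comment> \<open>cancel the leading term \<open>a x\<^sup>k\<close> of \<open>p\<close> using \<open>h(x) = u x\<^sup>k\<close>\<close>
  define p' where "p' = p - monom a k + smult (a * inverse u) h"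
  have "poly p' x = 1 - a * x ^ k + a * inverse u * (u * x ^ k)"
    unfolding p'_def using p ph by (simp add: poly_monom)
  also have "\<dots> = 1" using u0 by (simp add: field_simps)
  finally have pp: "poly p' x = 1" .
  have aiu: "a * inverse u \<in> S" using aI IS iuS by (auto intro: subringD[OF S])
  have cp': "coeff p' i = coeff p i - (if k = i then a else 0) + a * inverse u * coeff h i" for i
    unfolding p'_def by simp
  have cpI: "coeff p' i \<in> I" for i
    unfolding cp' using p aI I0 aiu chI by (auto intro!: Iadd Idiff Imul)
  have "coeff p' i = 0" if "i > k - 1" for i
  proof -
    have ik: "i \<ge> k" using that l0 lk by linarith
    have "coeff h i = 0" unfolding ch using cg0 ik lk by auto
    moreover have "coeff p i = (if k = i then a else 0)"
      using ik a_def coeff_eq_0[of p i] k_def by (cases "k = i") auto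
    ultimately show ?thesis unfolding cp' by simp
  qed
  then have "degree p' \<le> k - 1" by (intro degree_le) auto
  then have "degree p' < degree p" using l0 lk k_def by linarith
  then show ?thesis using pp cpI by blast
qed

lemma no_two_sided_relation:
  assumes "x \<noteq> 0" "\<forall>i. coeff p i \<in> I" "poly p x = 1"
    "\<forall>i. coeff q i \<in> I" "poly q (inverse x) = 1"
  shows False
proof -
  have "\<And>x p q. x \<noteq> 0 \<Longrightarrow> (\<forall>i. coeff p i \<in> I) \<Longrightarrow> poly p x = 1 \<Longrightarrow>
    (\<forall>i. coeff q i \<in> I) \<Longrightarrow> poly q (inverse x) = 1 \<Longrightarrow> degree p + degree q = N \<Longrightarrow> False" for N
  proof (induction N rule: less_induct)
    case (less N x p q)
    show False
    proof (cases "degree q \<le> degree p")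
      case True
      then obtain p' where "\<forall>i. coeff p' i \<in> I" "poly p' x = 1" "degree p' < degree p"
        using degree_reduction less.prems by blast
      then show False using less.IH[of "degree p' + degree q" x p' q] less.prems by auto
    next
      case False
      have "inverse x \<noteq> 0" "poly p (inverse (inverse x)) = 1" using less.prems by auto
      then obtain q' where "\<forall>i. coeff q' i \<in> I" "poly q' (inverse x) = 1" "degree q' < degree q"
        using degree_reduction[of "inverse x" q p] less.prems False by auto
      then show False using less.IH[of "degree p + degree q'" x p q'] less.prems by auto
    qed
  qed
  then show False using assms by blast
qed

end

lemma prime_compl_mult:
  assumes R: "is_subring R" and P: "prime_ideal R P"
    and s: "s \<in> R" "s \<notin> P" and s': "s' \<in> R" "s' \<notin> P"
  shows "s * s' \<in> R" "s * s' \<notin> P"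
  using prime_idealD(2)[OF P] subringD(5)[OF R] s s' by auto

lemma loc_prime_subring:
  assumes R: "is_subring R" and P: "prime_ideal R P"
  shows "is_subring (loc R P)" "R \<subseteq> loc R P"
proof -
  have nz: "s \<noteq> 0" if "s \<notin> P" for s using that idealD(2)[OF prime_idealD(1)[OF P]] by auto
  show RRp: "R \<subseteq> loc R P"
    using loc_I[of _ R 1 P] subringD(2)[OF R] prime_one[OF P] by force
  show "is_subring (loc R P)" unfolding is_subring_def
  proof (intro conjI ballI)
    show "0 \<in> loc R P" "1 \<in> loc R P" using RRp subringD(1,2)[OF R] by auto
  next
    fix a b assume "a \<in> loc R P" "b \<in> loc R P"
    then obtain r s r' s' where rs: "a = r / s" "r \<in> R" "s \<in> R" "s \<notin> P"
      "b = r' / s'" "r' \<in> R" "s' \<in> R" "s' \<notin> P" by (metis loc_E)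
    have "a + b = (r * s' + r' * s) / (s * s')" "a - b = (r * s' - r' * s) / (s * s')"
      "a * b = (r * r') / (s * s')" using rs nz by (auto simp: field_simps)
    then show "a + b \<in> loc R P" "a - b \<in> loc R P" "a * b \<in> loc R P"
      using rs prime_compl_mult[OF R P, of s s'] by (auto intro!: loc_I subringD[OF R])
  qed
qed

lemma loc_prime_proper:
  assumes R: "is_subring R" and P: "prime_ideal R P"
  shows "1 \<notin> submod_prod P (loc R P)"
proof -
  note Pi = idealD[OF prime_idealD(1)[OF P]]
  have nz: "s \<noteq> 0" if "s \<notin> P" for s using that Pi(2) by auto
  let ?C = "{p / s | p s. p \<in> P \<and> s \<in> R \<and> s \<notin> P}"
  have "submod_prod P (loc R P) \<subseteq> ?C"
  proof (rule submod_prod_least)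
    show "0 \<in> ?C" using Pi(2) prime_one[OF P] subringD(2)[OF R] by force
  next
    fix a b assume "a \<in> ?C" "b \<in> ?C"
    then obtain r s r' s' where rs: "a = r / s" "r \<in> P" "s \<in> R" "s \<notin> P"
      "b = r' / s'" "r' \<in> P" "s' \<in> R" "s' \<notin> P" by blast
    have "a + b = (s' * r + s * r') / (s * s')" using rs nz by (auto simp: field_simps)
    moreover have "s' * r + s * r' \<in> P" using rs by (intro Pi(3,5)) auto
    ultimately show "a + b \<in> ?C" using prime_compl_mult[OF R P, of s s'] rs by blast
  next
    fix a b assume a: "a \<in> P" and "b \<in> loc R P"
    then obtain r s where rs: "b = r / s" "r \<in> R" "s \<in> R" "s \<notin> P" by (metis loc_E)
    have "a * b = (r * a) / s" using rs by simp
    moreover have "r * a \<in> P" using rs a Pi(5) by auto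
    ultimately show "a * b \<in> ?C" using rs by blast
  qed
  moreover have "1 \<notin> ?C"
  proof
    assume "1 \<in> ?C"
    then obtain p s where "1 = p / s" "p \<in> P" "s \<notin> P" by blast
    then show False using nz[of s] by (simp add: field_simps)
  qed
  ultimately show ?thesis by blast
qed

lemma loc_in_subfield: "subfield K \<Longrightarrow> R \<subseteq> K \<Longrightarrow> loc R P \<subseteq> K"
  by (auto elim!: loc_E intro: subfield_div)

definition avoiding :: "'a::field set \<Rightarrow> 'a set \<Rightarrow> 'a set \<Rightarrow> 'a set set" where
  "avoiding K A P = {S. is_subring S \<and> A \<subseteq> S \<and> S \<subseteq> K \<and> 1 \<notin> submod_prod P S}"

text \<open>Zorn's lemma: unions of chains stay in the family, because a relation
  \<open>1 = \<Sum> p\<^sub>i s\<^sub>i\<close> involves only finitely many \<open>s\<^sub>i\<close>.\<close>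
lemma avoiding_maximal:
  assumes "A \<in> avoiding K A P"
  shows "\<exists>S\<in>avoiding K A P. \<forall>X\<in>avoiding K A P. S \<subseteq> X \<longrightarrow> X = S"
proof (rule subset_Zorn_nonempty)
  show "avoiding K A P \<noteq> {}" using assms by blast
next
  fix C assume Cne: "C \<noteq> {}" and ch: "subset.chain (avoiding K A P) C"
  have CF: "C \<subseteq> avoiding K A P" and cmp: "\<And>X Y. X \<in> C \<Longrightarrow> Y \<in> C \<Longrightarrow> X \<subseteq> Y \<or> Y \<subseteq> X"
    using ch unfolding subset_chain_def by auto
  have sub: "is_subring (\<Union>C)" unfolding is_subring_def
  proof (intro conjI ballI)
    obtain S0 where "S0 \<in> C" using Cne by blast
    then show "0 \<in> \<Union>C" "1 \<in> \<Union>C" using CF subringD(1,2) unfolding avoiding_def by blast+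
  next
    fix x y assume "x \<in> \<Union>C" "y \<in> \<Union>C"
    then obtain S where S: "S \<in> C" "x \<in> S" "y \<in> S" using cmp by blast
    then have "is_subring S" using CF unfolding avoiding_def by auto
    then show "x + y \<in> \<Union>C" "x - y \<in> \<Union>C" "x * y \<in> \<Union>C" using S subringD by blast+
  qed
  have "1 \<notin> submod_prod P (\<Union>C)"
  proof
    assume "1 \<in> submod_prod P (\<Union>C)"
    then obtain n :: nat and a b where ab: "1 = (\<Sum>i<n. a i * b i)" "\<forall>i<n. a i \<in> P \<and> b i \<in> \<Union>C"
      unfolding submod_prod_iff by blast
    have "finite (b ` {..<n})" "b ` {..<n} \<subseteq> \<Union>C" using ab by auto
    then obtain S where S: "S \<in> C" "b ` {..<n} \<subseteq> S"
      using finite_subset_Union_chain[OF _ _ Cne ch] by metis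
    then have "1 \<in> submod_prod P S" unfolding submod_prod_iff using ab by blast
    then show False using S CF unfolding avoiding_def by blast
  qed
  then show "\<Union>C \<in> avoiding K A P" using sub Cne CF unfolding avoiding_def by blast
qed

text \<open>A maximal member \<open>S\<close> of the family is a valuation ring of \<open>K\<close> whose maximal
  ideal contains \<open>P\<close>.\<close>
locale maximal_avoiding =
  fixes K A P S :: "'a::field set"
  assumes K: "subfield K" and PA: "P \<subseteq> A"
    and mem: "S \<in> avoiding K A P" and maximal: "\<And>X. X \<in> avoiding K A P \<Longrightarrow> S \<subseteq> X \<Longrightarrow> X = S"
begin

abbreviation I :: "'a set" where "I \<equiv> submod_prod P S"

lemma S: "is_subring S" and AS: "A \<subseteq> S" and SK: "S \<subseteq> K" and I1: "1 \<notin> I"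
  using mem unfolding avoiding_def by auto

lemma I_ideal: "is_ideal S I"
  unfolding is_ideal_def
proof (intro conjI ballI)
  show "I \<subseteq> S" using submod_prod_subring[OF S] PA AS by blast
  show "0 \<in> I" by (rule submod_prod_zero)
next
  fix a b assume a: "a \<in> I" and b: "b \<in> I"
  then show "a + b \<in> I" by (rule submod_prod_add)
  have "(- 1) * b \<in> I"
    using b by (intro submod_prod_scale) (auto intro: subring_uminus[OF S])
  then have "a + (- 1) * b \<in> I" using submod_prod_add[OF a] by blast
  then show "a - b \<in> I" by simp
next
  fix s a assume "s \<in> S" "a \<in> I"
  then show "s * a \<in> I" by (intro submod_prod_scale) (auto intro: subringD(5)[OF S])
qed

text \<open>By maximality, every \<open>y \<in> K\<close> outside \<open>S\<close> satisfies \<open>1 \<in> P S[y]\<close>, i.e. a relation \<open>p(y) = 1\<close>.\<close>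
lemma outside_relation:
  assumes "y \<in> K" "y \<notin> S"
  shows "\<exists>p. (\<forall>i. coeff p i \<in> I) \<and> poly p y = 1"
proof -
  have "1 \<in> submod_prod P (adjoin S y)"
  proof (rule ccontr)
    assume "1 \<notin> submod_prod P (adjoin S y)"
    then have "adjoin S y \<in> avoiding K A P"
      using adjoin_subring[OF S] adjoin_sup[OF S] AS adjoin_in_subfield[OF K SK assms(1)]
      unfolding avoiding_def by blast
    then have "adjoin S y = S" using maximal adjoin_sup[OF S] by blast
    then show False using adjoin_gen[OF S, of y] assms(2) by simp
  qed
  then show ?thesis using adjoin_prod[OF S] by blast
qed

text \<open>\<open>I\<close> lies in the Jacobson radical of \<open>S\<close>: otherwise a relation \<open>p(1/u) = 1\<close> for
  \<open>u = 1 - c\<close> gives \<open>u\<^sup>k \<in> I\<close>, while \<open>u\<^sup>k \<equiv> 1\<close> modulo \<open>I\<close>.\<close>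
lemma one_minus_unit:
  assumes c: "c \<in> I" shows "inverse (1 - c) \<in> S"
proof (rule ccontr)
  note Ii = idealD[OF I_ideal]
  define u where "u = 1 - c"
  assume "inverse (1 - c) \<notin> S"
  moreover have uS: "u \<in> S" using c Ii(1) subringD(2,4)[OF S] u_def by blast
  moreover have u0: "u \<noteq> 0" using c I1 u_def by auto
  ultimately obtain p where p: "\<forall>i. coeff p i \<in> I" "poly p (inverse u) = 1"
    using outside_relation[of "inverse u"] subfield_inv[OF K, of u] SK unfolding u_def by blast
  have "poly (reflect_poly p) u = u ^ degree p" using poly_reflect_poly_nz[OF u0, of p] p by simp
  moreover have "poly (reflect_poly p) u \<in> I"
    by (rule poly_in_set) (use Ii(2,3,5) uS p in \<open>auto simp: coeff_reflect_poly\<close>)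
  ultimately have uk: "u ^ degree p \<in> I" by simp
  have "u ^ k - 1 \<in> I" for k
  proof (induction k)
    case 0 then show ?case using Ii(2) by simp
  next
    case (Suc k)
    have "u ^ Suc k - 1 = u * (u ^ k - 1) - c" unfolding u_def by (simp add: algebra_simps)
    then show ?case using Suc Ii(4,5) uS c by auto
  qed
  then have "u ^ degree p - (u ^ degree p - 1) \<in> I" using uk Ii(4) by blast
  then show False using I1 by simp
qed

sublocale jacobson_ideal S I
  using S I1 one_minus_unit idealD[OF I_ideal] by unfold_locales auto

lemma valring: "valring K S"
  unfolding valring_def
proof (intro conjI ballI impI)
  fix x assume x: "x \<in> K" "x \<noteq> 0"
  show "x \<in> S \<or> inverse x \<in> S"
  proof (rule ccontr)
    assume "\<not> ?thesis"
    then obtain p q where "\<forall>i. coeff p i \<in> I" "poly p x = 1" "\<forall>i. coeff q i \<in> I" "poly q (inverse x) = 1"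
      using outside_relation x subfield_inv[OF K] by meson
    then show False using no_two_sided_relation x by blast
  qed
qed (use S SK in auto)

lemma P_sub_maxv: "P \<subseteq> maxv S"
proof
  fix p assume p: "p \<in> P"
  show "p \<in> maxv S"
  proof (rule ccontr)
    assume "p \<notin> maxv S"
    then have "p \<noteq> 0" "inverse p \<in> S" using notin_maxv PA AS p by auto
    then have "p * inverse p \<in> I" using submod_prod_mult_mem p by blast
    then show False using I1 \<open>p \<noteq> 0\<close> by simp
  qed
qed

end

theorem chevalley:
  assumes K: "subfield K" and R: "is_subring R" and RK: "R \<subseteq> K" and P: "prime_ideal R P"
  shows "\<exists>V. valring K V \<and> R \<subseteq> V \<and> maxv V \<inter> R = P"
proof -
  note Rp = loc_prime_subring[OF R P] loc_prime_proper[OF R P]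
  have PR: "P \<subseteq> R" using idealD(1)[OF prime_idealD(1)[OF P]] .
  have "loc R P \<in> avoiding K (loc R P) P"
    using Rp loc_in_subfield[OF K RK] unfolding avoiding_def by blast
  then obtain S where S: "S \<in> avoiding K (loc R P) P"
    and S_max: "\<And>X. X \<in> avoiding K (loc R P) P \<Longrightarrow> S \<subseteq> X \<Longrightarrow> X = S"
    using avoiding_maximal by metis
  interpret maximal_avoiding K "loc R P" P S
  proof
    show "P \<subseteq> loc R P" using PR Rp(2) by (rule order_trans)
  qed (use K S S_max in auto)
  have "maxv S \<inter> R \<subseteq> P"
  proof
    fix r assume r: "r \<in> maxv S \<inter> R"
    show "r \<in> P"
    proof (rule ccontr)
      assume "r \<notin> P"
      then have "1 / r \<in> S" using loc_I[of 1 R r P] r subringD(2)[OF R] AS by auto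
      moreover have "r \<noteq> 0" using \<open>r \<notin> P\<close> idealD(2)[OF prime_idealD(1)[OF P]] by auto
      ultimately show False using r unfolding maxv_def by (auto simp: divide_inverse)
    qed
  qed
  then have "maxv S \<inter> R = P" using P_sub_maxv PR by blast
  then show ?thesis using valring Rp(2) AS by blast
qed

section \<open>Lifting chains of primes to valuation rings\<close>

lemma compositum_subring:
  assumes T: "is_subring T" and TW: "T \<subseteq> W" and M: "is_ideal W M"
  shows "is_subring (T + M)"
proof -
  note Mi = idealD[OF M]
  show ?thesis unfolding is_subring_def
  proof (intro conjI ballI)
    show "0 \<in> T + M" "1 \<in> T + M"
      using set_plus_intro[of 0 T 0 M] set_plus_intro[of 1 T 0 M] subringD(1,2)[OF T] Mi(2) by auto
  next
    fix a b assume "a \<in> T + M" "b \<in> T + M"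
    then obtain t1 w1 t2 w2 where ab: "a = t1 + w1" "t1 \<in> T" "w1 \<in> M" "b = t2 + w2" "t2 \<in> T" "w2 \<in> M"
      by (metis set_plus_elim)
    have e: "a + b = (t1 + t2) + (w1 + w2)" "a - b = (t1 - t2) + (w1 - w2)"
      "a * b = t1 * t2 + (t1 * w2 + t2 * w1 + w1 * w2)" unfolding ab(1,4) by (simp_all add: algebra_simps)
    have w: "t1 * w2 + t2 * w1 + w1 * w2 \<in> M" using ab TW Mi by (meson subsetD)
    show "a + b \<in> T + M" unfolding e(1)
      using set_plus_intro[OF subringD(3)[OF T ab(2,5)] Mi(3)[OF ab(3,6)]] .
    show "a - b \<in> T + M" unfolding e(2)
      using set_plus_intro[OF subringD(4)[OF T ab(2,5)] Mi(4)[OF ab(3,6)]] .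
    show "a * b \<in> T + M" unfolding e(3)
      using set_plus_intro[OF subringD(5)[OF T ab(2,5)] w] .
  qed
qed

lemma compositum_trace:
  assumes T: "is_subring T" and M: "is_ideal W M" and Q: "is_ideal T Q" and MQ: "M \<inter> T \<subseteq> Q"
    and t: "t \<in> T" "w \<in> M" "t + w \<in> Q + M"
  shows "t \<in> Q"
proof -
  obtain p w' where pw: "t + w = p + w'" "p \<in> Q" "w' \<in> M" using t(3) by (metis set_plus_elim)
  have "t - p = w' - w" using pw(1) by (simp add: algebra_simps)
  moreover have "t - p \<in> T" using t pw idealD(1)[OF Q] subringD(4)[OF T] by auto
  moreover have "w' - w \<in> M" using t pw idealD(4)[OF M] by auto
  ultimately have "t - p \<in> Q" using MQ by auto
  then show ?thesis using idealD(3)[OF Q _ pw(2)] by force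
qed

lemma compositum_ideal:
  assumes TW: "T \<subseteq> W" and M: "is_ideal W M" and Q: "is_ideal T Q"
  shows "is_ideal (T + M) (Q + M)"
proof -
  note Mi = idealD[OF M] and Qi = idealD[OF Q]
  show ?thesis unfolding is_ideal_def
  proof (intro conjI ballI)
    show "Q + M \<subseteq> T + M" using set_plus_mono2[OF Qi(1) order_refl] .
    show "0 \<in> Q + M" using set_plus_intro[OF Qi(2) Mi(2)] by simp
  next
    fix x y assume "x \<in> Q + M" "y \<in> Q + M"
    then obtain p1 w1 p2 w2 where xy: "x = p1 + w1" "p1 \<in> Q" "w1 \<in> M" "y = p2 + w2" "p2 \<in> Q" "w2 \<in> M"
      by (metis set_plus_elim)
    have e: "x + y = (p1 + p2) + (w1 + w2)" "x - y = (p1 - p2) + (w1 - w2)"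
      unfolding xy(1,4) by (simp_all add: algebra_simps)
    show "x + y \<in> Q + M" unfolding e(1) using set_plus_intro[OF Qi(3)[OF xy(2,5)] Mi(3)[OF xy(3,6)]] .
    show "x - y \<in> Q + M" unfolding e(2) using set_plus_intro[OF Qi(4)[OF xy(2,5)] Mi(4)[OF xy(3,6)]] .
  next
    fix r x assume "r \<in> T + M" "x \<in> Q + M"
    then obtain t1 w1 p2 w2 where rx: "r = t1 + w1" "t1 \<in> T" "w1 \<in> M" "x = p2 + w2" "p2 \<in> Q" "w2 \<in> M"
      by (metis set_plus_elim)
    have e: "r * x = t1 * p2 + (t1 * w2 + p2 * w1 + w1 * w2)"
      unfolding rx(1,4) by (simp add: algebra_simps)
    have "t1 * w2 + p2 * w1 + w1 * w2 \<in> M" using rx Qi(1) TW Mi by (meson subsetD)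
    then show "r * x \<in> Q + M" unfolding e using set_plus_intro[OF Qi(5)[OF rx(2,5)]] by blast
  qed
qed

lemma compositum_prime:
  assumes T: "is_subring T" and TW: "T \<subseteq> W" and M: "is_ideal W M"
    and Q: "prime_ideal T Q" and MQ: "M \<inter> T \<subseteq> Q"
  shows "prime_ideal (T + M) (Q + M)" "(Q + M) \<inter> T = Q"
proof -
  note Mi = idealD[OF M] and Qi = idealD[OF prime_idealD(1)[OF Q]]
  have trace: "t \<in> Q" if "t \<in> T" "w \<in> M" "t + w \<in> Q + M" for t w
    using compositum_trace[OF T M prime_idealD(1)[OF Q] MQ that] .
  show "(Q + M) \<inter> T = Q"
    using trace[of _ 0] Mi(2) Qi(1) set_plus_intro[of _ Q 0 M] by fastforce
  have "Q + M \<noteq> T + M"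
  proof
    assume "Q + M = T + M"
    then have "1 + 0 \<in> Q + M" using set_plus_intro[OF subringD(2)[OF T] Mi(2)] by simp
    then have "1 \<in> Q" using trace[of 1 0] subringD(2)[OF T] Mi(2) by simp
    then show False using prime_one[OF Q] by simp
  qed
  moreover have "x \<in> Q + M \<or> y \<in> Q + M" if x: "x \<in> T + M" and y: "y \<in> T + M" and prod: "x * y \<in> Q + M" for x y
  proof -
    obtain t1 w1 t2 w2 where xy: "x = t1 + w1" "t1 \<in> T" "w1 \<in> M" "y = t2 + w2" "t2 \<in> T" "w2 \<in> M"
      using x y by (metis set_plus_elim)
    have w: "t1 * w2 + t2 * w1 + w1 * w2 \<in> M" using xy TW Mi by (meson subsetD)
    have "x * y = t1 * t2 + (t1 * w2 + t2 * w1 + w1 * w2)" unfolding xy(1,4) by (simp add: algebra_simps)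
    then have "t1 * t2 \<in> Q" using trace[OF _ w] prod xy subringD(5)[OF T] by simp
    then have "t1 \<in> Q \<or> t2 \<in> Q" using prime_idealD(2)[OF Q] xy by auto
    then show ?thesis unfolding xy(1,4)
      using set_plus_intro[of t1 Q w1 M] set_plus_intro[of t2 Q w2 M] xy by blast
  qed
  ultimately show "prime_ideal (T + M) (Q + M)"
    using compositum_ideal[OF TW M prime_idealD(1)[OF Q]] unfolding prime_ideal_def by blast
qed

lemma valring_sub_of_maxv:
  assumes V: "valring K V" and W: "valring K W" and VW: "maxv W \<subseteq> maxv V"
  shows "V \<subseteq> W"
proof
  fix x assume xV: "x \<in> V"
  show "x \<in> W"
  proof (rule ccontr)
    assume xW: "x \<notin> W"
    have x0: "x \<noteq> 0" using xW subringD(1)[OF valringD(1)[OF W]] by auto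
    then have "inverse x \<in> W" using valringD(2,3)[OF V] valringD(3)[OF W] xV xW by blast
    then have "inverse x \<in> maxv V" using VW xW unfolding maxv_def by auto
    then show False using xV x0 unfolding maxv_def by auto
  qed
qed

text \<open>One step of the lifting: a valuation ring \<open>W \<supseteq> T\<close> centred on \<open>P\<^sub>m\<close> and a larger prime
  \<open>P\<^sub>n\<close> of \<open>T\<close> yield a valuation ring \<open>V \<subseteq> W\<close> centred on \<open>P\<^sub>n\<close>, with \<open>M\<^sub>W \<subset> M\<^sub>V\<close>.
  \<open>V\<close> comes from Chevalley's theorem applied to the prime \<open>P\<^sub>n + M\<^sub>W\<close> of \<open>T + M\<^sub>W\<close>.\<close>
lemma chain_step:
  assumes K: "subfield K" and T: "is_subring T"
    and W: "valring K W" and TW: "T \<subseteq> W" and WT: "maxv W \<inter> T = Pm"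
    and Pn: "prime_ideal T Pn" and PmPn: "Pm \<subset> Pn"
  shows "\<exists>V. valring K V \<and> T \<subseteq> V \<and> V \<subseteq> W \<and> maxv W \<subset> maxv V \<and> maxv V \<inter> T = Pn"
proof -
  let ?M = "maxv W"
  have WK: "W \<subseteq> K" using valringD[OF W] by auto
  have Mi: "is_ideal W ?M" using prime_idealD(1)[OF maxv_prime[OF K W]] .
  have MPn: "?M \<inter> T \<subseteq> Pn" using WT PmPn by blast
  note R = compositum_subring[OF T TW Mi]
  note P' = compositum_prime[OF T TW Mi Pn MPn]
  have RK: "T + ?M \<subseteq> K"
  proof
    fix x assume "x \<in> T + ?M"
    then obtain t w where "x = t + w" "t \<in> T" "w \<in> ?M" by (rule set_plus_elim)
    then show "x \<in> K" using TW WK maxv_sub subringD(3)[OF subfield_subring[OF K]] by blast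
  qed
  obtain V where V: "valring K V" "T + ?M \<subseteq> V" "maxv V \<inter> (T + ?M) = Pn + ?M"
    using chevalley[OF K R RK P'(1)] by blast
  have TR: "T \<subseteq> T + ?M"
    using set_zero_plus2[OF idealD(2)[OF Mi], of T] by (simp add: add.commute)
  have MR: "?M \<subseteq> T + ?M" using set_zero_plus2[OF subringD(1)[OF T]] .
  have "?M \<subseteq> Pn + ?M" using set_zero_plus2[OF idealD(2)[OF prime_idealD(1)[OF Pn]]] .
  then have MV: "?M \<subseteq> maxv V" using V(3) MR by blast
  have VT: "maxv V \<inter> T = Pn" using V(3) TR P'(2) by blast
  obtain p where "p \<in> Pn" "p \<notin> Pm" using PmPn by blast
  then have "p \<in> maxv V" "p \<notin> ?M" using VT WT idealD(1)[OF prime_idealD(1)[OF Pn]] by auto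
  then have "?M \<subset> maxv V" using MV by blast
  then show ?thesis using V(1,2) TR VT valring_sub_of_maxv[OF V(1) W MV] by blast
qed

lemma prime_chain_lift:
  assumes K: "subfield K" and T: "is_subring T" and TK: "T \<subseteq> K"
  shows "(\<forall>i\<le>m. prime_ideal T (P i)) \<Longrightarrow> (\<forall>i<m. P i \<subset> P (Suc i)) \<Longrightarrow>
    \<exists>V Q. valring K V \<and> T \<subseteq> V \<and> (\<forall>i\<le>m. prime_ideal V (Q i)) \<and> (\<forall>i<m. Q i \<subset> Q (Suc i))
       \<and> Q m = maxv V \<and> maxv V \<inter> T = P m"
proof (induction m)
  case 0
  then have "prime_ideal T (P 0)" by simp
  then obtain V where V: "valring K V" "T \<subseteq> V" "maxv V \<inter> T = P 0"
    using chevalley[OF K T TK] by blast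
  then show ?case using maxv_prime[OF K V(1)]
    by (intro exI[of _ V] exI[of _ "\<lambda>_. maxv V"]) simp
next
  case (Suc m)
  have "\<forall>i\<le>m. prime_ideal T (P i)" "\<forall>i<m. P i \<subset> P (Suc i)" using Suc.prems by auto
  then obtain W Q where W: "valring K W" "T \<subseteq> W" "\<forall>i\<le>m. prime_ideal W (Q i)"
    "\<forall>i<m. Q i \<subset> Q (Suc i)" "Q m = maxv W" "maxv W \<inter> T = P m"
    using Suc.IH by blast
  obtain V where V: "valring K V" "T \<subseteq> V" "V \<subseteq> W" "maxv W \<subset> maxv V" "maxv V \<inter> T = P (Suc m)"
  proof -
    have "prime_ideal T (P (Suc m))" "P m \<subset> P (Suc m)" using Suc.prems by simp_all
    then show ?thesis using chain_step[OF K T W(1,2,6)] that by blast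
  qed
  \<comment> \<open>the old primes \<open>Q\<^sub>i \<subseteq> M\<^sub>W \<subseteq> V\<close> remain primes of \<open>V\<close>; append \<open>M\<^sub>V\<close>\<close>
  have old: "prime_ideal V (Q i)" if "i \<le> m" for i
  proof (rule prime_ideal_subring[OF _ valringD(1)[OF V(1)] _ V(3)])
    show "prime_ideal W (Q i)" using W(3) that by blast
    then show "Q i \<subseteq> V" using prime_sub_maxv[OF valringD(1)[OF W(1)]] V(4) maxv_sub by blast
  qed
  define Q' where "Q' = Q(Suc m := maxv V)"
  have "\<forall>i\<le>Suc m. prime_ideal V (Q' i)"
    using old maxv_prime[OF K V(1)] by (auto simp: Q'_def le_Suc_eq)
  moreover have "\<forall>i<Suc m. Q' i \<subset> Q' (Suc i)"
    using W(4,5) V(4) by (auto simp: Q'_def less_Suc_eq)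
  moreover have "Q' (Suc m) = maxv V" by (simp add: Q'_def)
  ultimately show ?case using V(1,2,5) by blast
qed

lemma krull_dim_le_from_valrings:
  assumes K: "subfield K" and T: "is_subring T" and TK: "T \<subseteq> K"
    and bound: "\<And>V. valring K V \<Longrightarrow> T \<subseteq> V \<Longrightarrow> krull_dim_le V n"
  shows "krull_dim_le T n"
proof (rule ccontr)
  assume "\<not> krull_dim_le T n"
  then obtain P where P: "\<forall>i\<le>Suc n. prime_ideal T (P i)" "\<forall>i\<le>n. P i \<subset> P (Suc i)"
    unfolding krull_dim_le_def by blast
  have "\<forall>i<Suc n. P i \<subset> P (Suc i)" using P(2) by (simp add: less_Suc_eq_le)
  then obtain V Q where V: "valring K V" "T \<subseteq> V" "\<forall>i\<le>Suc n. prime_ideal V (Q i)"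
    "\<forall>i<Suc n. Q i \<subset> Q (Suc i)"
    using prime_chain_lift[OF K T TK P(1)] by blast
  moreover have "\<forall>i\<le>n. Q i \<subset> Q (Suc i)" using V(4) by (simp add: less_Suc_eq_le)
  ultimately show False using bound unfolding krull_dim_le_def by blast
qed

lemma dspanI: "\<forall>s\<in>S. c s \<in> D \<Longrightarrow> (\<Sum>s\<in>S. c s * s) \<in> dspan D S"
  unfolding dspan_def by blast

lemma dspanE:
  assumes "z \<in> dspan D S"
  obtains c where "z = (\<Sum>s\<in>S. c s * s)" "\<forall>s\<in>S. c s \<in> D"
  using assms unfolding dspan_def by blast

lemma dspan_least:
  assumes "0 \<in> E" "\<And>x y. x \<in> E \<Longrightarrow> y \<in> E \<Longrightarrow> x + y \<in> E"
    and "\<And>d x. d \<in> D \<Longrightarrow> x \<in> E \<Longrightarrow> d * x \<in> E" and "S \<subseteq> E"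
  shows "dspan D S \<subseteq> E"
proof
  fix z assume "z \<in> dspan D S"
  then obtain c where z: "z = (\<Sum>s\<in>S. c s * s)" "\<forall>s\<in>S. c s \<in> D" by (rule dspanE)
  have "(\<Sum>s\<in>S'. c s * s) \<in> E" if "S' \<subseteq> S" for S'
    using that
  proof (induction S' rule: infinite_finite_induct)
    case (insert s S')
    then have "c s * s \<in> E" using assms(3,4) z(2) by blast
    then show ?case using insert assms(2) by simp
  qed (use assms(1) in simp_all)
  then show "z \<in> E" using z(1) by blast
qed

lemma dspan_closed:
  assumes D: "is_subring D"
  shows "0 \<in> dspan D S" "x \<in> dspan D S \<Longrightarrow> y \<in> dspan D S \<Longrightarrow> x + y \<in> dspan D S"
    "d \<in> D \<Longrightarrow> x \<in> dspan D S \<Longrightarrow> d * x \<in> dspan D S"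
proof -
  show "0 \<in> dspan D S" using dspanI[of S "\<lambda>_. 0" D] subringD(1)[OF D] by simp
next
  assume "x \<in> dspan D S" "y \<in> dspan D S"
  then obtain c c' where "x = (\<Sum>s\<in>S. c s * s)" "\<forall>s\<in>S. c s \<in> D"
    "y = (\<Sum>s\<in>S. c' s * s)" "\<forall>s\<in>S. c' s \<in> D" by (elim dspanE)
  moreover have "(\<Sum>s\<in>S. c s * s) + (\<Sum>s\<in>S. c' s * s) = (\<Sum>s\<in>S. (c s + c' s) * s)"
    by (simp add: sum.distrib distrib_right)
  ultimately show "x + y \<in> dspan D S"
    using dspanI[of S "\<lambda>s. c s + c' s" D] subringD(3)[OF D] by auto
next
  assume "d \<in> D" "x \<in> dspan D S"
  then obtain c where "x = (\<Sum>s\<in>S. c s * s)" "\<forall>s\<in>S. c s \<in> D" by (elim dspanE)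
  moreover have "d * (\<Sum>s\<in>S. c s * s) = (\<Sum>s\<in>S. (d * c s) * s)"
    by (simp add: sum_distrib_left mult.assoc)
  ultimately show "d * x \<in> dspan D S"
    using dspanI[of S "\<lambda>s. d * c s" D] subringD(5)[OF D] \<open>d \<in> D\<close> by auto
qed

lemma dspan_gens:
  assumes D: "is_subring D" and S: "finite S" shows "S \<subseteq> dspan D S"
proof
  fix s0 assume s0: "s0 \<in> S"
  have "(\<Sum>s\<in>S. (if s = s0 then 1 else 0) * s) = (\<Sum>s\<in>S. if s = s0 then s else 0)"
    by (rule sum.cong) auto
  also have "\<dots> = s0" using S s0 by (simp add: sum.delta')
  finally have "(\<Sum>s\<in>S. (if s = s0 then 1 else 0) * s) = s0" .
  then show "s0 \<in> dspan D S"
    using dspanI[of S "\<lambda>s. if s = s0 then 1 else 0" D] subringD(1,2)[OF D] by auto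
qed

lemma dspan_mono:
  assumes D: "is_subring D" and "finite S'" "S \<subseteq> S'"
  shows "dspan D S \<subseteq> dspan D S'"
proof (rule dspan_least)
  show "0 \<in> dspan D S'" by (rule dspan_closed(1)[OF D])
  show "x + y \<in> dspan D S'" if "x \<in> dspan D S'" "y \<in> dspan D S'" for x y
    using dspan_closed(2)[OF D that] .
  show "d * x \<in> dspan D S'" if "d \<in> D" "x \<in> dspan D S'" for d x
    using dspan_closed(3)[OF D that] .
  show "S \<subseteq> dspan D S'" using dspan_gens[OF D assms(2)] assms(3) by blast
qed

lemma dspan_sub_ideal: "is_ideal D J \<Longrightarrow> S \<subseteq> J \<Longrightarrow> dspan D S \<subseteq> J"
  by (rule dspan_least) (auto simp: is_ideal_def)

lemma submodD:
  assumes "is_submod D E"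
  shows "E \<subseteq> qfield D" "0 \<in> E" "x \<in> E \<Longrightarrow> y \<in> E \<Longrightarrow> x + y \<in> E"
    "d \<in> D \<Longrightarrow> x \<in> E \<Longrightarrow> d * x \<in> E"
  using assms unfolding is_submod_def by auto

lemma Fbar_submod: "E \<in> Fbar D \<Longrightarrow> is_submod D E"
  unfolding Fbar_def by blast

lemma D_Fbar: assumes D: "is_subring D" shows "D \<in> Fbar D"
proof -
  have "is_submod D D" unfolding is_submod_def
    using D_sub_qfield[OF D] subringD(1,3,5)[OF D] by blast
  moreover have "D \<noteq> {0}" using subringD(2)[OF D] by auto
  ultimately show ?thesis unfolding Fbar_def by blast
qed

lemma fDI: "finite S \<Longrightarrow> S \<subseteq> qfield D \<Longrightarrow> dspan D S \<noteq> {0} \<Longrightarrow> dspan D S \<in> fD D"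
  unfolding fD_def by blast

lemma fDE:
  assumes "F \<in> fD D"
  obtains S where "F = dspan D S" "finite S" "S \<subseteq> qfield D" "dspan D S \<noteq> {0}"
  using assms unfolding fD_def by blast

lemma fD_Fbar:
  assumes D: "is_subring D" and F: "F \<in> fD D" shows "F \<in> Fbar D"
proof -
  obtain S where S: "F = dspan D S" "finite S" "S \<subseteq> qfield D" "dspan D S \<noteq> {0}"
    using F by (rule fDE)
  note K = subfield_subring[OF qfield_subfield[OF D]]
  have "dspan D S \<subseteq> qfield D"
  proof (rule dspan_least)
    show "0 \<in> qfield D" by (rule subringD(1)[OF K])
    show "x + y \<in> qfield D" if "x \<in> qfield D" "y \<in> qfield D" for x y
      by (rule subringD(3)[OF K that])
    show "d * x \<in> qfield D" if "d \<in> D" "x \<in> qfield D" for d x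
      using subringD(5)[OF K _ that(2)] D_sub_qfield[OF D] that(1) by blast
  qed (rule S(3))
  then show ?thesis using S dspan_closed[OF D] unfolding Fbar_def is_submod_def by blast
qed

lemma principal_fD:
  assumes D: "is_subring D" and z: "z \<in> D" "z \<noteq> 0"
  shows "dspan D {z} \<in> fD D" "z \<in> dspan D {z}"
proof -
  show zz: "z \<in> dspan D {z}" using dspan_gens[OF D, of "{z}"] by simp
  then show "dspan D {z} \<in> fD D" using fDI[of "{z}" D] z D_sub_qfield[OF D] by auto
qed

locale semistar_op =
  fixes D :: "'a::field set" and st :: "'a set \<Rightarrow> 'a set"
  assumes D: "is_subring D" and semistar: "semistar D st"
begin

abbreviation K :: "'a set" where "K \<equiv> qfield D"

lemma st_Fbar: "E \<in> Fbar D \<Longrightarrow> st E \<in> Fbar D"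
  using semistar unfolding semistar_def by (elim conjE) blast

lemma st_mono: "E \<in> Fbar D \<Longrightarrow> F \<in> Fbar D \<Longrightarrow> E \<subseteq> F \<Longrightarrow> st E \<subseteq> st F"
  using semistar unfolding semistar_def by (elim conjE) blast

lemma st_ext: "E \<in> Fbar D \<Longrightarrow> E \<subseteq> st E"
  and st_idem: "E \<in> Fbar D \<Longrightarrow> st (st E) = st E"
  using semistar unfolding semistar_def by (elim conjE; blast)+

lemma st_submod: "E \<in> Fbar D \<Longrightarrow> is_submod D (st E)"
  using st_Fbar Fbar_submod by blast

lemma one_st_eq:
  assumes G: "G \<in> fD D" "G \<subseteq> D" and one: "1 \<in> st G"
  shows "st G = st D"
proof
  have GF: "G \<in> Fbar D" using fD_Fbar[OF D G(1)] .
  show "st G \<subseteq> st D" using st_mono[OF GF D_Fbar[OF D] G(2)] .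
  have "D \<subseteq> st G"
  proof
    fix d assume "d \<in> D"
    then have "d * 1 \<in> st G" using submodD(4)[OF st_submod[OF GF] _ one] by blast
    then show "d \<in> st G" by simp
  qed
  then have "st D \<subseteq> st (st G)" using st_mono[OF D_Fbar[OF D] st_Fbar[OF GF]] by blast
  then show "st D \<subseteq> st G" using st_idem[OF GF] by simp
qed

lemma star_fI: "G \<in> fD D \<Longrightarrow> G \<subseteq> E \<Longrightarrow> x \<in> st G \<Longrightarrow> x \<in> star_f D st E"
  unfolding star_f_def by blast

lemma star_fE:
  assumes "x \<in> star_f D st E"
  obtains G where "G \<in> fD D" "G \<subseteq> E" "x \<in> st G"
  using assms unfolding star_f_def by blast

text \<open>An ideal is \<open>\<star>\<^sub>f\<close>-proper if it contains no finitely generated \<open>G\<close> with \<open>1 \<in> G\<^sup>\<star>\<close>;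
  these are exactly the ideals contained in a proper quasi-\<open>\<star>\<^sub>f\<close>-ideal.\<close>
definition star_f_proper :: "'a set \<Rightarrow> bool" where
  "star_f_proper J \<longleftrightarrow> (\<forall>G\<in>fD D. G \<subseteq> J \<longrightarrow> 1 \<notin> st G)"

lemma quasi_ideal_proper:
  assumes "quasi_ideal D st J" "J \<noteq> D" shows "star_f_proper J"
  unfolding star_f_proper_def
proof (intro ballI impI notI)
  fix G assume "G \<in> fD D" "G \<subseteq> J" "1 \<in> st G"
  then have "1 \<in> star_f D st J \<inter> D" using star_fI subringD(2)[OF D] by blast
  then have "1 \<in> J" and "is_ideal D J" using assms(1) unfolding quasi_ideal_def by auto
  then show False using ideal_one_eq assms(2) by blast
qed

section \<open>\<open>\<star>\<close>-tilde valuation overrings are linked\<close>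

lemma star_tilde_sub:
  assumes "M \<in> QMax D st" shows "star_tilde D st F \<subseteq> submod_prod F (loc D M)"
proof -
  have "star_tilde D st F = \<Inter>{submod_prod F (loc D M) | M. M \<in> QMax D st}"
    using assms unfolding star_tilde_def by auto
  then show ?thesis using assms by blast
qed

lemma star_tilde_K:
  assumes F: "F \<in> Fbar D" shows "star_tilde D st F \<subseteq> K"
proof (cases "QMax D st = {}")
  case True then show ?thesis unfolding star_tilde_def by simp
next
  case False
  then obtain M where M: "M \<in> QMax D st" by blast
  have "submod_prod F (loc D M) \<subseteq> K"
    using submod_prod_subring[OF subfield_subring[OF qfield_subfield[OF D]]]
      submodD(1)[OF Fbar_submod[OF F]] loc_in_subfield[OF qfield_subfield[OF D] D_sub_qfield[OF D]]
    by blast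
  then show ?thesis using star_tilde_sub[OF M] by blast
qed

text \<open>If \<open>F \<subseteq> D\<close> and \<open>F\<^sup>\<star> = D\<^sup>\<star>\<close>, then \<open>F\<close> meets the complement of every quasi-\<open>\<star>\<^sub>f\<close>-maximal
  \<open>M\<close>, so \<open>1 \<in> F D\<^sub>M\<close> for all \<open>M\<close>, i.e. \<open>1 \<in> F\<^sup>\<star>\<^sup>~\<close>.\<close>
lemma one_in_star_tilde:
  assumes F: "F \<in> fD D" "F \<subseteq> D" "st F = st D"
  shows "1 \<in> star_tilde D st F"
proof (cases "QMax D st = {}")
  case True
  then show ?thesis unfolding star_tilde_def using D_sub_qfield[OF D] subringD(2)[OF D] by auto
next
  case False
  have "1 \<in> submod_prod F (loc D M)" if M: "M \<in> QMax D st" for M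
  proof -
    have q: "quasi_ideal D st M" "M \<noteq> D" using M unfolding QMax_def by auto
    have "1 \<in> st F" using F(3) st_ext[OF D_Fbar[OF D]] subringD(2)[OF D] by auto
    then obtain f where f: "f \<in> F" "f \<notin> M"
      using quasi_ideal_proper[OF q] F(1) unfolding star_f_proper_def by blast
    have "f \<noteq> 0" using f(2) q(1) unfolding quasi_ideal_def is_ideal_def by auto
    moreover have "1 / f \<in> loc D M" using loc_I[OF subringD(2)[OF D] _ f(2)] f(1) F(2) by blast
    ultimately show ?thesis using submod_prod_mult_mem[OF f(1), of "1 / f" "loc D M"] by simp
  qed
  then show ?thesis unfolding star_tilde_def using False by auto
qed

lemma linked_from_tilde:
  assumes tv: "tilde_valuation_overring D st V"
  shows "star_dT_linked D st V"
proof -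
  have ov: "overring D V"
    using tv unfolding tilde_valuation_overring_def valuation_overring_def by blast
  have "submod_prod F V = V" if F: "F \<in> fD D" "F \<subseteq> D" "st F = st D" for F
  proof (rule submod_prod_eq_ring)
    show "is_subring V" "F \<subseteq> V" using ov F(2) unfolding overring_def by auto
    show "1 \<in> submod_prod F V"
      using one_in_star_tilde[OF F] tv F(1) unfolding tilde_valuation_overring_def by blast
  qed
  then show ?thesis unfolding star_dT_linked_def using ov by blast
qed

end

section \<open>Quasi-\<open>\<star>\<^sub>f\<close>-maximal ideals\<close>

definition ideal_plus :: "'a::field set \<Rightarrow> 'a set \<Rightarrow> 'a \<Rightarrow> 'a set" where
  "ideal_plus D J x = {j + d * x | j d. j \<in> J \<and> d \<in> D}"

lemma ideal_plusI: "j \<in> J \<Longrightarrow> d \<in> D \<Longrightarrow> j + d * x \<in> ideal_plus D J x"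
  unfolding ideal_plus_def by blast

lemma ideal_plusE:
  assumes "z \<in> ideal_plus D J x"
  obtains j d where "z = j + d * x" "j \<in> J" "d \<in> D"
  using assms unfolding ideal_plus_def by blast

lemma ideal_plus_ideal:
  assumes D: "is_subring D" and J: "is_ideal D J" and x: "x \<in> D"
  shows "is_ideal D (ideal_plus D J x)" "J \<subseteq> ideal_plus D J x" "x \<in> ideal_plus D J x"
proof -
  note Ji = idealD[OF J]
  show "J \<subseteq> ideal_plus D J x" using ideal_plusI[of _ J 0 D x] subringD(1)[OF D] by force
  show "x \<in> ideal_plus D J x" using ideal_plusI[OF Ji(2) subringD(2)[OF D], of x] by simp
  show "is_ideal D (ideal_plus D J x)" unfolding is_ideal_def
  proof (intro conjI ballI)
    show "ideal_plus D J x \<subseteq> D"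
    proof
      fix z assume "z \<in> ideal_plus D J x"
      then obtain j d where "z = j + d * x" "j \<in> J" "d \<in> D" by (rule ideal_plusE)
      then show "z \<in> D" using Ji(1) x subringD(3,5)[OF D] by blast
    qed
    show "0 \<in> ideal_plus D J x" using ideal_plusI[OF Ji(2) subringD(1)[OF D], of x] by simp
  next
    fix a b assume "a \<in> ideal_plus D J x" "b \<in> ideal_plus D J x"
    then obtain j d j' d' where jd: "a = j + d * x" "j \<in> J" "d \<in> D" "b = j' + d' * x" "j' \<in> J" "d' \<in> D"
      by (elim ideal_plusE)
    have e: "a + b = (j + j') + (d + d') * x" "a - b = (j - j') + (d - d') * x"
      unfolding jd(1,4) by (simp_all add: algebra_simps)
    show "a + b \<in> ideal_plus D J x" unfolding e(1)
      using ideal_plusI[OF Ji(3)[OF jd(2,5)] subringD(3)[OF D jd(3,6)]] .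
    show "a - b \<in> ideal_plus D J x" unfolding e(2)
      using ideal_plusI[OF Ji(4)[OF jd(2,5)] subringD(4)[OF D jd(3,6)]] .
  next
    fix t a assume t: "t \<in> D" and "a \<in> ideal_plus D J x"
    then obtain j d where jd: "a = j + d * x" "j \<in> J" "d \<in> D" by (elim ideal_plusE)
    have e: "t * a = t * j + (t * d) * x" unfolding jd(1) by (simp add: algebra_simps)
    show "t * a \<in> ideal_plus D J x" unfolding e
      using ideal_plusI[OF Ji(5)[OF t jd(2)] subringD(5)[OF D t jd(3)]] .
  qed
qed

lemma fD_in_ideal_plus:
  assumes D: "is_subring D" and J: "is_ideal D J"
    and S: "finite S" "S \<subseteq> ideal_plus D J x" and H: "H \<in> fD D" "H \<subseteq> J"
  obtains U where "U \<in> fD D" "H \<subseteq> U" "U \<subseteq> J" "S \<subseteq> ideal_plus D U x"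
proof -
  obtain SH where SH: "H = dspan D SH" "finite SH" "dspan D SH \<noteq> {0}" using H(1) by (rule fDE)
  have "\<forall>s\<in>S. \<exists>jd. s = fst jd + snd jd * x \<and> fst jd \<in> J \<and> snd jd \<in> D"
  proof
    fix s assume "s \<in> S"
    then obtain j d where "s = j + d * x" "j \<in> J" "d \<in> D" using S(2) by (blast elim: ideal_plusE)
    then show "\<exists>jd. s = fst jd + snd jd * x \<and> fst jd \<in> J \<and> snd jd \<in> D"
      by (intro exI[of _ "(j, d)"]) simp
  qed
  then obtain f where f: "\<And>s. s \<in> S \<Longrightarrow> s = fst (f s) + snd (f s) * x \<and> fst (f s) \<in> J \<and> snd (f s) \<in> D"
    by (metis bchoice)
  define gens where "gens = (\<lambda>s. fst (f s)) ` S \<union> SH"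
  define U where "U = dspan D gens"
  have fin: "finite gens" using S(1) SH(2) unfolding gens_def by blast
  have HU: "H \<subseteq> U" unfolding U_def SH(1) by (rule dspan_mono[OF D fin]) (auto simp: gens_def)
  have "SH \<subseteq> J" using dspan_gens[OF D SH(2)] SH(1) H(2) by blast
  then have gensJ: "gens \<subseteq> J" using f unfolding gens_def by blast
  have UJ: "U \<subseteq> J" unfolding U_def using dspan_sub_ideal[OF J gensJ] .
  have "U \<noteq> {0}" using HU SH(1,3) dspan_closed(1)[OF D, of SH] by blast
  moreover have "gens \<subseteq> qfield D" using gensJ idealD(1)[OF J] D_sub_qfield[OF D] by blast
  ultimately have UfD: "U \<in> fD D" using fDI[OF fin] unfolding U_def by blast
  have "S \<subseteq> ideal_plus D U x"
  proof
    fix s assume s: "s \<in> S"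
    have "fst (f s) \<in> U" unfolding U_def using dspan_gens[OF D fin] s unfolding gens_def by blast
    then show "s \<in> ideal_plus D U x" using ideal_plusI[of _ U "snd (f s)" D x] f[OF s] by metis
  qed
  then show ?thesis using that UfD HU UJ by blast
qed

lemma chain_union_ideal:
  assumes Cne: "C \<noteq> {}" and Ci: "\<And>J. J \<in> C \<Longrightarrow> is_ideal D J"
    and cmp: "\<And>X Y. X \<in> C \<Longrightarrow> Y \<in> C \<Longrightarrow> X \<subseteq> Y \<or> Y \<subseteq> X"
  shows "is_ideal D (\<Union>C)"
  unfolding is_ideal_def
proof (intro conjI ballI)
  show "\<Union>C \<subseteq> D" using Ci unfolding is_ideal_def by blast
  show "0 \<in> \<Union>C" using Ci Cne unfolding is_ideal_def by blast
next
  fix x y assume "x \<in> \<Union>C" "y \<in> \<Union>C"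
  then obtain X Y where "X \<in> C" "x \<in> X" "Y \<in> C" "y \<in> Y" by blast
  then obtain J where J: "J \<in> C" "x \<in> J" "y \<in> J" using cmp[of X Y] by blast
  then show "x + y \<in> \<Union>C" "x - y \<in> \<Union>C" using idealD(3,4)[OF Ci[OF J(1)]] by blast+
next
  fix t x assume "t \<in> D" "x \<in> \<Union>C"
  then obtain J where J: "J \<in> C" "x \<in> J" by blast
  then show "t * x \<in> \<Union>C" using idealD(5)[OF Ci[OF J(1)] \<open>t \<in> D\<close>] by blast
qed

context semistar_op
begin

text \<open>Zorn's lemma: \<open>\<star>\<^sub>f\<close>-properness is preserved under unions of chains, since a finitely
  generated \<open>G\<close> inside the union lies in one member of the chain.\<close>
lemma star_f_proper_maximal:
  assumes N: "is_ideal D N" "star_f_proper N"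
  shows "\<exists>J. is_ideal D J \<and> N \<subseteq> J \<and> star_f_proper J \<and>
           (\<forall>X. is_ideal D X \<and> J \<subseteq> X \<and> star_f_proper X \<longrightarrow> X = J)"
proof -
  define Fam where "Fam = {J. is_ideal D J \<and> N \<subseteq> J \<and> star_f_proper J}"
  have "\<exists>J\<in>Fam. \<forall>X\<in>Fam. J \<subseteq> X \<longrightarrow> X = J"
  proof (rule subset_Zorn_nonempty)
    show "Fam \<noteq> {}" using N unfolding Fam_def by blast
  next
    fix C assume Cne: "C \<noteq> {}" and ch: "subset.chain Fam C"
    have CF: "C \<subseteq> Fam" and cmp: "\<And>X Y. X \<in> C \<Longrightarrow> Y \<in> C \<Longrightarrow> X \<subseteq> Y \<or> Y \<subseteq> X"
      using ch unfolding subset_chain_def by auto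
    have Ci: "is_ideal D J" if "J \<in> C" for J using that CF unfolding Fam_def by blast
    have "is_ideal D (\<Union>C)" using chain_union_ideal[OF Cne Ci cmp] .
    moreover have "N \<subseteq> \<Union>C" using Cne CF unfolding Fam_def by blast
    moreover have "star_f_proper (\<Union>C)" unfolding star_f_proper_def
    proof (intro ballI impI)
      fix G assume G: "G \<in> fD D" "G \<subseteq> \<Union>C"
      obtain S where S: "G = dspan D S" "finite S" using G(1) by (rule fDE)
      have "S \<subseteq> \<Union>C" using dspan_gens[OF D S(2)] S(1) G(2) by blast
      then obtain J where J: "J \<in> C" "S \<subseteq> J" by (rule finite_subset_Union_chain[OF S(2) _ Cne ch])
      have "G \<subseteq> J" using dspan_sub_ideal[OF Ci[OF J(1)] J(2)] S(1) by blast
      moreover have "star_f_proper J" using J(1) CF unfolding Fam_def by blast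
      ultimately show "1 \<notin> st G" using G(1) unfolding star_f_proper_def by blast
    qed
    ultimately show "\<Union>C \<in> Fam" unfolding Fam_def by blast
  qed
  then obtain J where J: "J \<in> Fam" and max: "\<And>X. X \<in> Fam \<Longrightarrow> J \<subseteq> X \<Longrightarrow> X = J" by blast
  have "X = J" if "is_ideal D X" "J \<subseteq> X" "star_f_proper X" for X
    using max[of X] J that unfolding Fam_def by blast
  then show ?thesis using J unfolding Fam_def by blast
qed

text \<open>Adjoining an element \<open>x \<in> J\<^sup>\<star>\<^sup>f\<close> keeps \<open>J\<close> \<open>\<star>\<^sub>f\<close>-proper: if \<open>x \<in> H\<^sup>\<star>\<close> with \<open>H \<subseteq> J\<close> and
  \<open>G \<subseteq> J + D x\<close> with \<open>1 \<in> G\<^sup>\<star>\<close>, then \<open>G \<subseteq> U + D x \<subseteq> U\<^sup>\<star>\<close> for a finitely generated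
  \<open>H \<subseteq> U \<subseteq> J\<close>, so \<open>1 \<in> U\<^sup>\<star>\<close>.\<close>
lemma star_f_proper_adjoin:
  assumes J: "is_ideal D J" "star_f_proper J" and x: "x \<in> star_f D st J"
  shows "star_f_proper (ideal_plus D J x)"
  unfolding star_f_proper_def
proof (intro ballI impI notI)
  fix G assume G: "G \<in> fD D" "G \<subseteq> ideal_plus D J x" "1 \<in> st G"
  obtain H where H: "H \<in> fD D" "H \<subseteq> J" "x \<in> st H" using x by (rule star_fE)
  obtain S where S: "G = dspan D S" "finite S" using G(1) by (rule fDE)
  have "S \<subseteq> ideal_plus D J x" using dspan_gens[OF D S(2)] S(1) G(2) by blast
  then obtain U where U: "U \<in> fD D" "H \<subseteq> U" "U \<subseteq> J" "S \<subseteq> ideal_plus D U x"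
    using fD_in_ideal_plus[OF D J(1) S(2) _ H(1,2)] by blast
  have UF: "U \<in> Fbar D" using fD_Fbar[OF D U(1)] .
  note stU = submodD[OF st_submod[OF UF]]
  have "x \<in> st U" using st_mono[OF fD_Fbar[OF D H(1)] UF U(2)] H(3) by blast
  then have "ideal_plus D U x \<subseteq> st U"
    using st_ext[OF UF] stU(3,4) by (blast elim: ideal_plusE)
  then have "G \<subseteq> st U" unfolding S(1)
    by (intro dspan_least) (use U(4) stU in auto)
  then have "st G \<subseteq> st U" using st_mono[OF fD_Fbar[OF D G(1)] st_Fbar[OF UF]] st_idem[OF UF] by simp
  then show False using G(3) J(2) U(1,3) unfolding star_f_proper_def by blast
qed

text \<open>A nonzero ideal lies in its \<open>\<star>\<^sub>f\<close>-closure: \<open>z \<in> (z D)\<^sup>\<star>\<close> for \<open>z \<noteq> 0\<close>, and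
  \<open>0 \<in> (y D)\<^sup>\<star>\<close> for any nonzero \<open>y \<in> J\<close>.\<close>
lemma ideal_sub_star_f:
  assumes J: "is_ideal D J" and nz: "y \<in> J" "y \<noteq> 0"
  shows "J \<subseteq> star_f D st J"
proof
  fix z assume z: "z \<in> J"
  note JD = idealD(1)[OF J]
  obtain w where w: "w \<in> J" "w \<noteq> 0" "z \<in> st (dspan D {w})"
  proof (cases "z = 0")
    case True
    have "dspan D {y} \<in> fD D" using principal_fD[OF D] nz JD by blast
    then show ?thesis using that nz True submodD(2)[OF st_submod[OF fD_Fbar[OF D]]] by blast
  next
    case False
    have "z \<in> dspan D {z}" "dspan D {z} \<in> fD D" using principal_fD[OF D _ False] z JD by auto
    then show ?thesis using that z False st_ext[OF fD_Fbar[OF D]] by blast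
  qed
  have "dspan D {w} \<in> fD D" "dspan D {w} \<subseteq> J"
    using principal_fD[OF D] w JD dspan_sub_ideal[OF J] by auto
  then show "z \<in> star_f D st J" using star_fI w(3) by blast
qed

lemma maximal_star_f_proper_QMax:
  assumes J: "is_ideal D J" "star_f_proper J" and nz: "y \<in> J" "y \<noteq> 0"
    and max: "\<And>X. is_ideal D X \<Longrightarrow> J \<subseteq> X \<Longrightarrow> star_f_proper X \<Longrightarrow> X = J"
  shows "J \<in> QMax D st"
proof -
  note Ji = idealD[OF J(1)]
  have "J \<subseteq> star_f D st J" using ideal_sub_star_f[OF J(1) nz] .
  moreover have "star_f D st J \<inter> D \<subseteq> J"
  proof
    fix x assume x: "x \<in> star_f D st J \<inter> D"
    have xD: "x \<in> D" using x by blast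
    note J' = ideal_plus_ideal[OF D J(1) xD]
    have "star_f_proper (ideal_plus D J x)" using star_f_proper_adjoin[OF J] x by blast
    then have "ideal_plus D J x = J" using max J'(1,2) by blast
    then show "x \<in> J" using J'(3) by simp
  qed
  ultimately have q: "quasi_ideal D st J" unfolding quasi_ideal_def using J(1) nz Ji(1) by blast
  have "J \<noteq> D"
  proof
    assume "J = D"
    then have "dspan D {1} \<in> fD D" "dspan D {1} \<subseteq> J" "1 \<in> dspan D {1}"
      using principal_fD[OF D subringD(2)[OF D]] dspan_sub_ideal[OF J(1)] subringD(2)[OF D] by auto
    then show False using J(2) st_ext[OF fD_Fbar[OF D]] unfolding star_f_proper_def by blast
  qed
  moreover have "J' = J" if "quasi_ideal D st J'" "J' \<noteq> D" "J \<subseteq> J'" for J'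
    using max quasi_ideal_proper[OF that(1,2)] that unfolding quasi_ideal_def by blast
  ultimately show ?thesis unfolding QMax_def using q by blast
qed

lemma QMax_above:
  assumes N: "is_ideal D N" "star_f_proper N" and nz: "y \<in> N" "y \<noteq> 0"
  shows "\<exists>M\<in>QMax D st. N \<subseteq> M"
proof -
  obtain J where J: "is_ideal D J" "N \<subseteq> J" "star_f_proper J"
    and max: "\<And>X. is_ideal D X \<Longrightarrow> J \<subseteq> X \<Longrightarrow> star_f_proper X \<Longrightarrow> X = J"
    using star_f_proper_maximal[OF N] by blast
  have "J \<in> QMax D st" using maximal_star_f_proper_QMax[OF J(1,3) _ nz(2) max] J(2) nz(1) by blast
  then show ?thesis using J(2) by blast
qed

end

section \<open>Valuation rings above a linked overring are \<open>\<star>\<close>-tilde valuation overrings\<close>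

context semistar_op
begin

lemma center_ideal:
  assumes V: "valring K V" and DV: "D \<subseteq> V"
  shows "is_ideal D (maxv V \<inter> D)"
proof -
  note Mi = idealD[OF prime_idealD(1)[OF maxv_prime[OF qfield_subfield[OF D] V]]]
  show ?thesis unfolding is_ideal_def
  proof (intro conjI ballI)
    show "maxv V \<inter> D \<subseteq> D" "0 \<in> maxv V \<inter> D" using Mi(2) subringD(1)[OF D] by auto
  next
    fix a b assume "a \<in> maxv V \<inter> D" "b \<in> maxv V \<inter> D"
    then show "a + b \<in> maxv V \<inter> D" "a - b \<in> maxv V \<inter> D"
      using Mi(3,4) subringD(3,4)[OF D] by blast+
  next
    fix t a assume "t \<in> D" "a \<in> maxv V \<inter> D"
    then show "t * a \<in> maxv V \<inter> D" using Mi(5) DV subringD(5)[OF D] by blast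
  qed
qed

lemma loc_sub_valring:
  assumes V: "valring K V" and DV: "D \<subseteq> V" and NM: "maxv V \<inter> D \<subseteq> M"
  shows "loc D M \<subseteq> V"
proof
  fix z assume "z \<in> loc D M"
  then obtain a s where as: "z = a / s" "a \<in> D" "s \<in> D" "s \<notin> M" by (rule loc_E)
  then have "inverse s \<in> V" using notin_maxv DV NM by blast
  then have "a * inverse s \<in> V" using subringD(5)[OF valringD(1)[OF V]] DV as(2) by blast
  then show "z \<in> V" using as(1) by (simp add: divide_inverse)
qed

text \<open>If \<open>T \<subseteq> V\<close> is linked, the centre of \<open>V\<close> is \<open>\<star>\<^sub>f\<close>-proper: for \<open>G \<subseteq> M\<^sub>V \<inter> D\<close> with
  \<open>G\<^sup>\<star> = D\<^sup>\<star>\<close> linkedness gives \<open>1 \<in> G T \<subseteq> M\<^sub>V\<close>.\<close>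
lemma center_star_f_proper:
  assumes lk: "star_dT_linked D st T" and V: "valring K V" and TV: "T \<subseteq> V"
  shows "star_f_proper (maxv V \<inter> D)"
  unfolding star_f_proper_def
proof (intro ballI impI notI)
  fix G assume G: "G \<in> fD D" "G \<subseteq> maxv V \<inter> D" "1 \<in> st G"
  have T: "is_subring T" "D \<subseteq> T" using lk unfolding star_dT_linked_def overring_def by auto
  note Mi = idealD[OF prime_idealD(1)[OF maxv_prime[OF qfield_subfield[OF D] V]]]
  have "st G = st D" using one_st_eq[OF G(1)] G(2,3) by blast
  then have "submod_prod G T = T" using lk G(1,2) unfolding star_dT_linked_def by blast
  then have "1 \<in> submod_prod G T" using subringD(2)[OF T(1)] by simp
  moreover have "submod_prod G T \<subseteq> maxv V"
  proof (rule submod_prod_least)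
    show "0 \<in> maxv V" by (rule Mi(2))
    show "x + y \<in> maxv V" if "x \<in> maxv V" "y \<in> maxv V" for x y using Mi(3) that .
    show "a * b \<in> maxv V" if "a \<in> G" "b \<in> T" for a b
      using Mi(5)[of b a] that TV G(2) by (auto simp: mult.commute)
  qed
  ultimately show False using one_notin_maxv by blast
qed

lemma star_tilde_sub_field:
  assumes KV: "K \<subseteq> V" and F: "F \<in> fD D"
  shows "star_tilde D st F \<subseteq> submod_prod F V"
proof
  fix z assume z: "z \<in> star_tilde D st F"
  have FF: "F \<in> Fbar D" using fD_Fbar[OF D F] .
  note Fs = submodD[OF Fbar_submod[OF FF]]
  obtain f where f: "f \<in> F" "f \<noteq> 0" using FF Fs(2) unfolding Fbar_def by blast
  have "z / f \<in> V"
    using z star_tilde_K[OF FF] KV subfield_div[OF qfield_subfield[OF D]] f Fs(1) by blast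
  then have "f * (z / f) \<in> submod_prod F V" using submod_prod_mult_mem f(1) by blast
  then show "z \<in> submod_prod F V" using f(2) by simp
qed

text \<open>Every valuation ring \<open>V\<close> of \<open>K\<close> containing a \<open>(\<star>, d\<^sub>T)\<close>-linked overring is a \<open>\<star>\<close>-tilde
  valuation overring: if the centre \<open>N\<close> of \<open>V\<close> is nonzero it lies in some \<open>M \<in> QMax\<^sup>\<star>\<^sup>f(D)\<close>,
  and \<open>F\<^sup>\<star>\<^sup>~ \<subseteq> F D\<^sub>M \<subseteq> F V\<close>; if \<open>N = 0\<close>, then \<open>V = K\<close>.\<close>
lemma tilde_from_linked:
  assumes lk: "star_dT_linked D st T" and V: "valring K V" and TV: "T \<subseteq> V"
  shows "tilde_valuation_overring D st V"
proof -
  have DV: "D \<subseteq> V" using lk TV unfolding star_dT_linked_def overring_def by blast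
  have vo: "valuation_overring D V"
    using valringD[OF V] V DV unfolding valuation_overring_def overring_def valring_def by blast
  have "star_tilde D st F \<subseteq> submod_prod F V" if F: "F \<in> fD D" for F
  proof (cases "maxv V \<inter> D \<subseteq> {0}")
    case True
    \<comment> \<open>\<open>V \<supseteq> D\<^sub>(\<^sub>0\<^sub>) = K\<close>\<close>
    have KV: "K \<subseteq> V"
    proof
      fix z assume "z \<in> K"
      then obtain a b where "z = a / b" "a \<in> D" "b \<in> D" "b \<noteq> 0" by (rule qfieldE)
      then have "z \<in> loc D {0}" using loc_I by blast
      then show "z \<in> V" using loc_sub_valring[OF V DV True] by blast
    qed
    then show ?thesis using star_tilde_sub_field F by blast
  next
    case False
    then obtain y where y: "y \<in> maxv V \<inter> D" "y \<noteq> 0" by blast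
    obtain M where M: "M \<in> QMax D st" "maxv V \<inter> D \<subseteq> M"
      using QMax_above[OF center_ideal[OF V DV] center_star_f_proper[OF lk V TV] y] by blast
    have "submod_prod F (loc D M) \<subseteq> submod_prod F V"
      using submod_prod_mono loc_sub_valring[OF V DV M(2)] by blast
    then show ?thesis using star_tilde_sub[OF M(1)] by blast
  qed
  then show ?thesis unfolding tilde_valuation_overring_def using vo by blast
qed

end

theorem lemma4p1:
  fixes D :: "'a::field set" and st :: "'a set \<Rightarrow> 'a set" and n :: nat
  assumes "is_subring D" and "semistar D st"
  shows "(\<forall>T. star_dT_linked D st T \<longrightarrow> krull_dim_le T n) \<longleftrightarrow>
         (\<forall>V. tilde_valuation_overring D st V \<longrightarrow> krull_dim_le V n)"
proof -
  interpret semistar_op D st using assms by unfold_locales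
  show ?thesis
  proof
    assume "\<forall>T. star_dT_linked D st T \<longrightarrow> krull_dim_le T n"
    then show "\<forall>V. tilde_valuation_overring D st V \<longrightarrow> krull_dim_le V n"
      using linked_from_tilde by blast
  next
    assume tilde_bound: "\<forall>V. tilde_valuation_overring D st V \<longrightarrow> krull_dim_le V n"
    show "\<forall>T. star_dT_linked D st T \<longrightarrow> krull_dim_le T n"
    proof (intro allI impI)
      fix T assume lk: "star_dT_linked D st T"
      then have "is_subring T" "T \<subseteq> qfield D" unfolding star_dT_linked_def overring_def by auto
      then show "krull_dim_le T n"
        using krull_dim_le_from_valrings[OF qfield_subfield[OF assms(1)]] tilde_from_linked[OF lk] tilde_bound
        by blast
    qed
  qed
qed

end
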